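(* Let $G$ be a finite solvable group and suppose given integers $n(H,\phi)$ for all pairs $(H,\phi)$ with $H$ a subgroup of $G$ and $\phi$ a character of $H$, satisfying: (ACH1) $n(H,\phi_1+\phi_2)=n(H,\phi_1)+n(H,\phi_2)$ for all characters $\phi_1,\phi_2$ of $H$; (ACH2) $n(G,\mathrm{Ind}_H^G\phi)=n(H,\phi)$ for every subgroup $H$ and every character $\phi$ of $H$; (ACH3) $n(H,\phi)\ge0$ for every subgroup $H$ and every one-dimensional character $\phi$ of $H$. Let $H$ be a subgroup of $G$, $\chi$ a one-dimensional character of $G$ and $\phi$ a one-dimensional character of $H$. Then \[n(G,\mathrm{Ind}_H^G\phi)\ge(\chi|_H,\phi)\,n(G,\chi).\]
   Context: $(\cdot,\cdot)$ is the standard inner product of class functions, $(f_1,f_2)=\frac1{|H|}\sum_{h\in H}f_1(h)\overline{f_2(h)}$. $\mathrm{Ind}_H^G$ denotes induction of characters; a one-dimensional character is a character of degree $1$. *)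

theory Defs
  imports "HOL-Algebra.Solvable_Groups" "Jordan_Normal_Form.Matrix"
begin

definition mat_trace :: "complex mat \<Rightarrow> complex" where
  "mat_trace A = (\<Sum>i<dim_row A. A $$ (i, i))"

text \<open>A (complex) character of the subgroup H of G: the trace of a finite-dimensional
  complex matrix representation of H (dimension 0 allowed), extended by 0 outside H.\<close>
definition is_character :: "('a, 'b) monoid_scheme \<Rightarrow> 'a set \<Rightarrow> ('a \<Rightarrow> complex) \<Rightarrow> bool" where
  "is_character G H \<phi> \<longleftrightarrow>
     (\<exists>(d::nat) (\<rho>::'a \<Rightarrow> complex mat).
        (\<forall>h\<in>H. \<rho> h \<in> carrier_mat d d) \<and>
        \<rho> \<one>\<^bsub>G\<^esub> = 1\<^sub>m d \<and>
        (\<forall>g\<in>H. \<forall>h\<in>H. \<rho> (g \<otimes>\<^bsub>G\<^esub> h) = \<rho> g * \<rho> h) \<and>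
        (\<forall>h. \<phi> h = (if h \<in> H then mat_trace (\<rho> h) else 0)))"

definition is_linear_character :: "('a, 'b) monoid_scheme \<Rightarrow> 'a set \<Rightarrow> ('a \<Rightarrow> complex) \<Rightarrow> bool" where
  "is_linear_character G H \<phi> \<longleftrightarrow> is_character G H \<phi> \<and> \<phi> \<one>\<^bsub>G\<^esub> = 1"

definition induce :: "('a, 'b) monoid_scheme \<Rightarrow> 'a set \<Rightarrow> ('a \<Rightarrow> complex) \<Rightarrow> 'a \<Rightarrow> complex" where
  "induce G H \<phi> g =
     (if g \<in> carrier G then
        (1 / of_nat (card H)) *
          (\<Sum>x\<in>carrier G. (let y = x \<otimes>\<^bsub>G\<^esub> g \<otimes>\<^bsub>G\<^esub> inv\<^bsub>G\<^esub> x in if y \<in> H then \<phi> y else 0))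
      else 0)"

definition restrict_char :: "'a set \<Rightarrow> ('a \<Rightarrow> complex) \<Rightarrow> 'a \<Rightarrow> complex" where
  "restrict_char H \<chi> h = (if h \<in> H then \<chi> h else 0)"

definition char_inner :: "'a set \<Rightarrow> ('a \<Rightarrow> complex) \<Rightarrow> ('a \<Rightarrow> complex) \<Rightarrow> complex" where
  "char_inner H f1 f2 = (1 / of_nat (card H)) * (\<Sum>h\<in>H. f1 h * cnj (f2 h))"

end

theory Submission
  imports Defs "HOL-Algebra.Left_Coset" "HOL-Algebra.Multiplicative_Group"
begin

text \<open>
  Since n (G, Ind_H \<phi>) = n (H, \<phi>), there are two cases. If \<phi> \<noteq> \<chi>|_H, the two linear characters are
  orthogonal and the claim is n (H, \<phi>) \<ge> 0, which is (ACH3). If \<phi> = \<chi>|_H, the claim is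
  n (G, \<chi>) \<le> n (H, \<chi>|_H), proved by induction on the index of H. Let L be the last term of the
  derived series of G that is not contained in H; then H normalizes L and [L, L] \<subseteq> H. For every
  character \<alpha> of the abelian group L/(H \<inter> L), the product \<chi> \<alpha> extends to a linear character of
  S_\<alpha> = L Stab_H(\<alpha>), and orthogonality of these \<alpha> gives
  |A| |H| Ind_H (\<chi>|_H) = \<Sum> |S_\<alpha>| Ind_{S_\<alpha>} (\<chi> \<alpha>), summing over the set A of all \<alpha>.
  Applying n, the principal \<alpha> contributes |LH| n (LH, \<chi>|_LH) with |LH| = |A| |H|, and all other
  terms are nonnegative by (ACH3). Hence n (LH, \<chi>|_LH) \<le> n (H, \<chi>|_H), and LH is strictly larger
  than H.
\<close>

section \<open>Characters and additive functions\<close>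

definition multiplicative_on :: "('a, 'b) monoid_scheme \<Rightarrow> 'a set \<Rightarrow> ('a \<Rightarrow> 'c::times) \<Rightarrow> bool" where
  "multiplicative_on G S f \<longleftrightarrow> (\<forall>x\<in>S. \<forall>y\<in>S. f (x \<otimes>\<^bsub>G\<^esub> y) = f x * f y)"

lemma multiplicative_onD: "multiplicative_on G S f \<Longrightarrow> x \<in> S \<Longrightarrow> y \<in> S \<Longrightarrow> f (x \<otimes>\<^bsub>G\<^esub> y) = f x * f y"
  unfolding multiplicative_on_def by blast

lemma mat_trace_one_mat [simp]: "mat_trace (1\<^sub>m d) = of_nat d"
  unfolding mat_trace_def by simp

lemma mat_trace_four_block_mat:
  assumes "A \<in> carrier_mat d1 d1" "D \<in> carrier_mat d2 d2"
  shows "mat_trace (four_block_mat A B C D) = mat_trace A + mat_trace D"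
proof -
  have split: "(\<Sum>i<d1 + d2. f i) = (\<Sum>i<d1. f i) + (\<Sum>i<d2. f (d1 + i))" for f :: "nat \<Rightarrow> complex"
    by (induction d2) (auto simp: add.assoc)
  show ?thesis
    using assms unfolding mat_trace_def by (simp add: split)
qed

lemma is_character_zero: "is_character G K (\<lambda>_. 0)"
  unfolding is_character_def
  by (rule exI[of _ 0], rule exI[of _ "\<lambda>_. 1\<^sub>m 0"]) (auto simp: mat_trace_def)

text \<open>Characters add by taking block-diagonal sums of the representations.\<close>

lemma is_character_add:
  assumes "is_character G K f1" "is_character G K f2"
  shows "is_character G K (\<lambda>x. f1 x + f2 x)"
proof -
  obtain d1 r1 where r1: "\<forall>h\<in>K. r1 h \<in> carrier_mat d1 d1" "r1 \<one>\<^bsub>G\<^esub> = 1\<^sub>m d1"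
    "\<forall>g\<in>K. \<forall>h\<in>K. r1 (g \<otimes>\<^bsub>G\<^esub> h) = r1 g * r1 h"
    "\<forall>h. f1 h = (if h \<in> K then mat_trace (r1 h) else 0)"
    using assms(1) unfolding is_character_def by blast
  obtain d2 r2 where r2: "\<forall>h\<in>K. r2 h \<in> carrier_mat d2 d2" "r2 \<one>\<^bsub>G\<^esub> = 1\<^sub>m d2"
    "\<forall>g\<in>K. \<forall>h\<in>K. r2 (g \<otimes>\<^bsub>G\<^esub> h) = r2 g * r2 h"
    "\<forall>h. f2 h = (if h \<in> K then mat_trace (r2 h) else 0)"
    using assms(2) unfolding is_character_def by blast
  define r where "r = (\<lambda>h. four_block_mat (r1 h) (0\<^sub>m d1 d2) (0\<^sub>m d2 d1) (r2 h))"
  show ?thesis unfolding is_character_def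
  proof (intro exI[of _ "d1 + d2"] exI[of _ r] conjI ballI allI)
    fix g h assume "g \<in> K" "h \<in> K"
    then have c: "r1 g \<in> carrier_mat d1 d1" "r1 h \<in> carrier_mat d1 d1"
        "r2 g \<in> carrier_mat d2 d2" "r2 h \<in> carrier_mat d2 d2" using r1 r2 by auto
    show "r (g \<otimes>\<^bsub>G\<^esub> h) = r g * r h"
      unfolding r_def using \<open>g \<in> K\<close> \<open>h \<in> K\<close> r1 r2 c
      by (simp add: mult_four_block_mat[OF c(1) _ _ c(3) c(2) _ _ c(4)] c
           left_mult_zero_mat[OF c(4)] right_mult_zero_mat[OF c(1)]
           left_mult_zero_mat[OF c(2)] right_mult_zero_mat[OF c(3)]
           right_add_zero_mat[OF mult_carrier_mat[OF c(1) c(2)]]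
           left_add_zero_mat[OF mult_carrier_mat[OF c(3) c(4)]])
  next
    fix h show "f1 h + f2 h = (if h \<in> K then mat_trace (r h) else 0)"
      using r1 r2 unfolding r_def by (auto intro!: mat_trace_four_block_mat[symmetric])
  qed (use r1 r2 in \<open>auto simp: r_def\<close>)
qed

lemma is_character_sum:
  assumes "finite I" "\<And>i. i \<in> I \<Longrightarrow> is_character G K (f i)"
  shows "is_character G K (\<lambda>x. \<Sum>i\<in>I. f i x)"
  using assms by (induction I rule: finite_induct) (auto intro: is_character_zero is_character_add)

lemma is_character_of_nat_mult: "is_character G K f \<Longrightarrow> is_character G K (\<lambda>x. of_nat c * f x)"
  using is_character_sum[of "{..<c}" G K "\<lambda>_. f"] by simp

context
  fixes G :: "('a, 'b) monoid_scheme" and K :: "'a set" and \<nu> :: "('a \<Rightarrow> complex) \<Rightarrow> 'c::ring_1"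
  assumes additive: "\<And>f g. is_character G K f \<Longrightarrow> is_character G K g \<Longrightarrow> \<nu> (\<lambda>x. f x + g x) = \<nu> f + \<nu> g"
begin

lemma additive_zero: "\<nu> (\<lambda>_. 0) = 0"
  using additive[OF is_character_zero is_character_zero] by simp

lemma additive_sum:
  assumes "finite I" "\<And>i. i \<in> I \<Longrightarrow> is_character G K (f i)"
  shows "\<nu> (\<lambda>x. \<Sum>i\<in>I. f i x) = (\<Sum>i\<in>I. \<nu> (f i))"
  using assms
proof (induction I rule: finite_induct)
  case empty
  show ?case using additive_zero by simp
next
  case (insert i I)
  then show ?case
    using additive[of "f i" "\<lambda>x. \<Sum>i\<in>I. f i x"] is_character_sum[of I G K f] by simp
qed

lemma additive_of_nat_mult: "is_character G K f \<Longrightarrow> \<nu> (\<lambda>x. of_nat c * f x) = of_nat c * \<nu> f"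
  using additive_sum[of "{..<c}" "\<lambda>_. f"] by simp

end

context group begin

lemma is_linear_character_iff:
  assumes S: "subgroup S G"
  shows "is_linear_character G S \<psi> \<longleftrightarrow>
    \<psi> \<one> = 1 \<and> multiplicative_on G S \<psi> \<and> (\<forall>x. x \<notin> S \<longrightarrow> \<psi> x = 0)"
proof
  assume "is_linear_character G S \<psi>"
  then obtain d \<rho> where r: "\<forall>h\<in>S. \<rho> h \<in> carrier_mat d d" "\<rho> \<one> = 1\<^sub>m d"
    "\<forall>g\<in>S. \<forall>h\<in>S. \<rho> (g \<otimes> h) = \<rho> g * \<rho> h"
    "\<forall>h. \<psi> h = (if h \<in> S then mat_trace (\<rho> h) else 0)" and one: "\<psi> \<one> = 1"
    unfolding is_linear_character_def is_character_def by blast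
  have "\<one> \<in> S" using S subgroup.one_closed by blast
  then have "d = 1" using r(2,4) one by simp
  then have entry: "\<psi> x = \<rho> x $$ (0, 0)" and dim: "\<rho> x \<in> carrier_mat 1 1" if "x \<in> S" for x
    using r(1,4) that by (auto simp: mat_trace_def)
  have "multiplicative_on G S \<psi>"
    unfolding multiplicative_on_def
  proof (intro ballI)
    fix x y assume "x \<in> S" "y \<in> S"
    then show "\<psi> (x \<otimes> y) = \<psi> x * \<psi> y"
      using entry[of x] entry[of y] entry[of "x \<otimes> y"] dim[of x] dim[of y] r(3)
        subgroup.m_closed[OF S] by (simp add: scalar_prod_def)
  qed
  then show "\<psi> \<one> = 1 \<and> multiplicative_on G S \<psi> \<and> (\<forall>x. x \<notin> S \<longrightarrow> \<psi> x = 0)"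
    using one r(4) by simp
next
  assume \<psi>: "\<psi> \<one> = 1 \<and> multiplicative_on G S \<psi> \<and> (\<forall>x. x \<notin> S \<longrightarrow> \<psi> x = 0)"
  have "is_character G S \<psi>" unfolding is_character_def
  proof (intro exI[of _ 1] exI[of _ "\<lambda>h. mat 1 1 (\<lambda>_. \<psi> h)"] conjI ballI allI)
    fix g k assume "g \<in> S" "k \<in> S"
    then show "mat 1 1 (\<lambda>_. \<psi> (g \<otimes> k)) = mat 1 1 (\<lambda>_. \<psi> g) * mat 1 1 (\<lambda>_. \<psi> k)"
      using \<psi> by (intro eq_matI) (auto simp: scalar_prod_def multiplicative_on_def)
  qed (use \<psi> in \<open>auto intro!: eq_matI simp: mat_trace_def\<close>)
  then show "is_linear_character G S \<psi>" unfolding is_linear_character_def using \<psi> by auto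
qed

lemma mult_inv_cancel_left [simp]: "x \<in> carrier G \<Longrightarrow> y \<in> carrier G \<Longrightarrow> x \<otimes> (inv x \<otimes> y) = y"
  by (simp add: m_assoc[symmetric])

lemma inv_mult_cancel_left [simp]: "x \<in> carrier G \<Longrightarrow> y \<in> carrier G \<Longrightarrow> inv x \<otimes> (x \<otimes> y) = y"
  by (simp add: m_assoc[symmetric])

lemma mult_inv_cancel_right [simp]: "x \<in> carrier G \<Longrightarrow> y \<in> carrier G \<Longrightarrow> x \<otimes> y \<otimes> inv y = x"
  by (simp add: m_assoc)

lemma inv_mult_cancel_right [simp]: "x \<in> carrier G \<Longrightarrow> y \<in> carrier G \<Longrightarrow> x \<otimes> inv y \<otimes> y = x"
  by (simp add: m_assoc)

lemma subgroup_nat_pow_closed: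
  assumes "subgroup S G" "x \<in> S" shows "x [^] (n::nat) \<in> S"
  by (induction n) (simp_all add: subgroup.one_closed[OF assms(1)] subgroup.m_closed[OF assms(1) _ assms(2)])

lemma multiplicative_on_pow:
  fixes f :: "'a \<Rightarrow> 'c::monoid_mult"
  assumes "subgroup S G" "multiplicative_on G S f" "f \<one> = 1" "x \<in> S"
  shows "f (x [^] (n::nat)) = f x ^ n"
proof (induction n)
  case (Suc n)
  have "x [^] n \<in> S" using assms(1,4) by (rule subgroup_nat_pow_closed)
  then have "f (x [^] Suc n) = f x ^ n * f x" using Suc multiplicative_onD[OF assms(2) _ assms(4)] by simp
  then show ?case by (simp only: power_Suc2)
qed (use assms(3) in simp)

lemma multiplicative_on_root_of_unity:
  fixes f :: "'a \<Rightarrow> 'c::monoid_mult"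
  assumes "subgroup S G" "multiplicative_on G S f" "f \<one> = 1" "x \<in> S"
  shows "f x ^ order G = 1"
  using multiplicative_on_pow[OF assms, of "order G"] assms(3)
    pow_order_eq_1[OF subgroup.mem_carrier[OF assms(1,4)]] by simp

lemma multiplicative_on_norm:
  fixes f :: "'a \<Rightarrow> complex"
  assumes "finite (carrier G)" "subgroup S G" "multiplicative_on G S f" "f \<one> = 1" "x \<in> S"
  shows "cmod (f x) = 1"
proof -
  have "cmod (f x) ^ order G = 1 ^ order G"
    using arg_cong[OF multiplicative_on_root_of_unity[OF assms(2-5)], of cmod] by (simp add: norm_power)
  then show ?thesis
    by (rule power_eq_imp_eq_base) (use assms(1) order_gt_0_iff_finite in auto)
qed

text \<open>Translating by an element where the function is not 1 multiplies the sum by that value.\<close>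

lemma sum_multiplicative_on:
  fixes f :: "'a \<Rightarrow> 'c::idom"
  assumes S: "subgroup S G" and f: "multiplicative_on G S f"
  shows "(\<Sum>s\<in>S. f s) = (if \<forall>s\<in>S. f s = 1 then of_nat (card S) else 0)"
proof (cases "\<forall>s\<in>S. f s = 1")
  case False
  then obtain s0 where s0: "s0 \<in> S" "f s0 \<noteq> 1" by blast
  have bij: "bij_betw (\<lambda>x. s0 \<otimes> x) S S"
    by (rule bij_betwI[where g="\<lambda>x. inv s0 \<otimes> x"])
      (use s0 S in \<open>auto simp: m_assoc[symmetric] subgroup.m_closed subgroup.m_inv_closed subgroup.mem_carrier\<close>)
  have "(\<Sum>s\<in>S. f s) = (\<Sum>s\<in>S. f (s0 \<otimes> s))"
    using sum.reindex_bij_betw[OF bij, of f] by simp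
  also have "\<dots> = f s0 * (\<Sum>s\<in>S. f s)"
    by (simp add: sum_distrib_left multiplicative_onD[OF f s0(1)])
  finally have "(1 - f s0) * (\<Sum>s\<in>S. f s) = 0" by (simp add: algebra_simps)
  then have "(\<Sum>s\<in>S. f s) = 0" using s0 by simp
  then show ?thesis using False by auto
qed simp


lemma finite_subgroupI:
  assumes "finite (carrier G)" "U \<subseteq> carrier G" "\<one> \<in> U"
    and "\<And>x y. x \<in> U \<Longrightarrow> y \<in> U \<Longrightarrow> x \<otimes> y \<in> U"
  shows "subgroup U G"
proof (rule subgroupI)
  fix a assume a: "a \<in> U"
  have pow: "a [^] (n::nat) \<in> U" for n by (induction n) (use a assms(3,4) in auto)
  have ac: "a \<in> carrier G" using a assms(2) by auto
  have "a [^] (order G - 1) \<otimes> a = a [^] order G"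
    using order_gt_0_iff_finite[THEN iffD2, OF assms(1)] by (metis Suc_diff_1 nat_pow_Suc)
  then have "inv a = a [^] (order G - 1)"
    using ac pow_order_eq_1[OF ac] by (simp add: inv_equality)
  then show "inv a \<in> U" using pow by simp
qed (use assms in auto)

lemma is_linear_character_restrict_char:
  assumes "subgroup K G" "is_linear_character G (carrier G) \<chi>"
  shows "is_linear_character G K (restrict_char K \<chi>)"
  using assms subgroup.mem_carrier[OF assms(1)] subgroup.m_closed[OF assms(1)] subgroup.one_closed[OF assms(1)]
  unfolding is_linear_character_iff[OF assms(1)] is_linear_character_iff[OF subgroup_self]
    multiplicative_on_def restrict_char_def
  by auto

end

lemma complex_root_exists:
  assumes "0 < n" shows "\<exists>c::complex. c ^ n = z"
proof (cases "z = 0")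
  case False
  have "(1::complex) \<in> {z. z ^ n = 1}" by simp
  then show ?thesis
    using bij_betwE[OF bij_betw_nth_root_unity[OF False assms]] by blast
qed (use assms in auto)

lemma nontrivial_root_of_unity:
  assumes "2 \<le> n" shows "\<exists>c::complex. c ^ n = 1 \<and> c \<noteq> 1"
proof (rule ccontr)
  assume "\<not> ?thesis"
  then have "{c::complex. c ^ n = 1} \<subseteq> {1}" by auto
  then have "card {c::complex. c ^ n = 1} \<le> card {1::complex}" by (rule card_mono[rotated]) simp
  then show False using card_roots_unity_eq[of n] assms by simp
qed
section \<open>Induced linear characters\<close>

definition lcoset_reps :: "('a, 'b) monoid_scheme \<Rightarrow> 'a set \<Rightarrow> 'a set" where
  "lcoset_reps G S = (\<lambda>C. SOME x. x \<in> C) ` LCOSETS G S"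

context group begin

context
  fixes S assumes S: "subgroup S G"
begin

lemma lcoset_rep_in_lcoset:
  assumes "x \<in> carrier G" shows "(SOME t. t \<in> x <# S) \<in> x <# S"
  using lcos_self[OF assms S] by (rule someI)

lemma lcoset_repsE:
  assumes "t \<in> lcoset_reps G S"
  obtains x where "x \<in> carrier G" "t = (SOME t. t \<in> x <# S)" "t \<in> x <# S"
proof -
  obtain x where "x \<in> carrier G" "t = (SOME t. t \<in> x <# S)"
    using assms unfolding lcoset_reps_def LCOSETS_def by blast
  then show thesis using that lcoset_rep_in_lcoset by blast
qed

lemma lcoset_reps_subset: "lcoset_reps G S \<subseteq> carrier G"
proof
  fix t assume "t \<in> lcoset_reps G S"
  then obtain x where "x \<in> carrier G" "t \<in> x <# S" by (rule lcoset_repsE)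
  then show "t \<in> carrier G" using l_coset_carrier[OF _ _ S] by blast
qed

lemma lcoset_reps_eqI:
  assumes "t \<in> lcoset_reps G S" "t' \<in> lcoset_reps G S" "t <# S = t' <# S"
  shows "t = t'"
proof -
  have rep: "t = (SOME x. x \<in> t <# S)" if t: "t \<in> lcoset_reps G S" for t
  proof -
    obtain x where x: "x \<in> carrier G" "t = (SOME t. t \<in> x <# S)" "t \<in> x <# S"
      using t by (rule lcoset_repsE)
    have "x <# S = t <# S" by (rule l_repr_independence[OF x(3) x(1) S])
    then show ?thesis using x(2) by simp
  qed
  show ?thesis using rep[OF assms(1)] rep[OF assms(2)] assms(3) by simp
qed

lemma lcoset_reps_cover:
  assumes "x \<in> carrier G" shows "\<exists>t\<in>lcoset_reps G S. inv t \<otimes> x \<in> S"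
proof -
  let ?t = "SOME t. t \<in> x <# S"
  have t: "?t \<in> lcoset_reps G S" unfolding lcoset_reps_def LCOSETS_def using assms by blast
  have "x \<in> ?t <# S" by (rule l_coset_swap[OF lcoset_rep_in_lcoset[OF assms] assms S])
  then have "inv ?t \<otimes> x \<in> S"
    using subgroup.lcos_module_imp[OF S is_group] t lcoset_reps_subset by blast
  then show ?thesis using t by blast
qed

lemma lcoset_reps_unique:
  assumes "t \<in> lcoset_reps G S" "t' \<in> lcoset_reps G S" "x \<in> carrier G"
    and "inv t \<otimes> x \<in> S" "inv t' \<otimes> x \<in> S"
  shows "t = t'"
proof -
  have "u <# S = x <# S" if "u \<in> lcoset_reps G S" "inv u \<otimes> x \<in> S" for u
  proof -
    have u: "u \<in> carrier G" using that(1) lcoset_reps_subset by blast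
    have "x \<in> u <# S" by (rule subgroup.lcos_module_rev[OF S is_group u assms(3) that(2)])
    then show ?thesis by (rule l_repr_independence[OF _ u S])
  qed
  then have "t <# S = t' <# S" using assms by simp
  then show ?thesis by (rule lcoset_reps_eqI[OF assms(1,2)])
qed

lemma bij_betw_lcoset_reps_times:
  "bij_betw (\<lambda>(t, s). t \<otimes> s) (lcoset_reps G S \<times> S) (carrier G)"
proof (rule bij_betw_imageI)
  show "inj_on (\<lambda>(t, s). t \<otimes> s) (lcoset_reps G S \<times> S)"
  proof (rule inj_onI, clarify)
    fix t s t' s' assume a: "t \<in> lcoset_reps G S" "s \<in> S" "t' \<in> lcoset_reps G S" "s' \<in> S"
      and eq: "t \<otimes> s = t' \<otimes> s'"
    have c: "t \<in> carrier G" "t' \<in> carrier G" "s \<in> carrier G" "s' \<in> carrier G"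
      using a lcoset_reps_subset subgroup.mem_carrier[OF S] by auto
    have "inv t \<otimes> (t \<otimes> s) = s" using c by (simp add: m_assoc[symmetric])
    moreover have "inv t' \<otimes> (t \<otimes> s) = s'" unfolding eq using c by (simp add: m_assoc[symmetric])
    ultimately have "inv t \<otimes> (t \<otimes> s) \<in> S" "inv t' \<otimes> (t \<otimes> s) \<in> S" using a(2,4) by simp_all
    then have "t = t'" by (rule lcoset_reps_unique[OF a(1) a(3) m_closed[OF c(1) c(3)]])
    then show "t = t' \<and> s = s'" using eq c by simp
  qed
  show "(\<lambda>(t, s). t \<otimes> s) ` (lcoset_reps G S \<times> S) = carrier G"
  proof (intro equalityI subsetI)
    fix x assume x: "x \<in> carrier G"
    obtain t where t: "t \<in> lcoset_reps G S" "inv t \<otimes> x \<in> S" using lcoset_reps_cover[OF x] by blast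
    have "t \<otimes> (inv t \<otimes> x) = x" using x t lcoset_reps_subset by (auto simp: m_assoc[symmetric])
    then show "x \<in> (\<lambda>(t, s). t \<otimes> s) ` (lcoset_reps G S \<times> S)" using t by force
  next
    fix y assume "y \<in> (\<lambda>(t, s). t \<otimes> s) ` (lcoset_reps G S \<times> S)"
    then show "y \<in> carrier G" using lcoset_reps_subset subgroup.mem_carrier[OF S] by auto
  qed
qed

end

end

context group begin

context
  fixes S and \<psi> :: "'a \<Rightarrow> complex"
  assumes S: "subgroup S G" and \<psi>: "is_linear_character G S \<psi>"
begin

lemma linear_character_one: "\<psi> \<one> = 1"
  and linear_character_multiplicative: "multiplicative_on G S \<psi>"
  and linear_character_outside: "x \<notin> S \<Longrightarrow> \<psi> x = 0"
  using \<psi> unfolding is_linear_character_iff[OF S] by auto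

lemma linear_character_if_in [simp]: "(if x \<in> S then \<psi> x else 0) = \<psi> x"
  using linear_character_outside by simp

lemma linear_character_mult_left:
  assumes a: "a \<in> S" and b: "b \<in> carrier G" shows "\<psi> (a \<otimes> b) = \<psi> a * \<psi> b"
proof (cases "b \<in> S")
  case True
  then show ?thesis using multiplicative_onD[OF linear_character_multiplicative a] by simp
next
  case False
  have "inv a \<otimes> (a \<otimes> b) = b" using a b subgroup.mem_carrier[OF S] by (simp add: m_assoc[symmetric])
  then have "a \<otimes> b \<notin> S" using False a subgroup.m_closed[OF S] subgroup.m_inv_closed[OF S] by metis
  then show ?thesis using False by (simp add: linear_character_outside)
qed

lemma linear_character_mult_right:
  assumes a: "a \<in> carrier G" and b: "b \<in> S" shows "\<psi> (a \<otimes> b) = \<psi> a * \<psi> b"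
proof (cases "a \<in> S")
  case True
  then show ?thesis using multiplicative_onD[OF linear_character_multiplicative _ b] by simp
next
  case False
  have "(a \<otimes> b) \<otimes> inv b = a" using a b subgroup.mem_carrier[OF S] by (simp add: m_assoc)
  then have "a \<otimes> b \<notin> S" using False b subgroup.m_closed[OF S] subgroup.m_inv_closed[OF S] by metis
  then show ?thesis using False by (simp add: linear_character_outside)
qed

lemma linear_character_conj:
  assumes s: "s \<in> S" and y: "y \<in> carrier G" shows "\<psi> (inv s \<otimes> y \<otimes> s) = \<psi> y"
proof -
  have s': "inv s \<in> S" "s \<in> carrier G" using subgroup.m_inv_closed[OF S s] subgroup.mem_carrier[OF S s] .
  have "\<psi> (inv s) * \<psi> s = 1"
    using linear_character_mult_right[OF _ s, of "inv s"] s' linear_character_one by simp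
  moreover have "\<psi> (inv s \<otimes> y \<otimes> s) = \<psi> (inv s) * \<psi> y * \<psi> s"
    using linear_character_mult_right[OF _ s] linear_character_mult_left[OF s'(1) y] s' y by simp
  ultimately show ?thesis by (simp add: algebra_simps)
qed

lemma linear_character_lcoset_reps:
  assumes "t \<in> lcoset_reps G S" "t' \<in> lcoset_reps G S"
  shows "\<psi> (inv t \<otimes> t') = (if t = t' then 1 else 0)"
proof (cases "t = t'")
  case False
  have c: "t \<in> carrier G" "t' \<in> carrier G" using assms lcoset_reps_subset[OF S] by auto
  have "inv t \<otimes> t' \<notin> S"
    using lcoset_reps_unique[OF S assms c(2)] subgroup.one_closed[OF S] c False by auto
  then show ?thesis using False by (simp add: linear_character_outside)
qed (use assms lcoset_reps_subset[OF S] linear_character_one in auto)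

context
  assumes fin: "finite (carrier G)"
begin

lemma induce_linear_character_eq:
  assumes g: "g \<in> carrier G"
  shows "induce G S \<psi> g = (\<Sum>t\<in>lcoset_reps G S. \<psi> (inv t \<otimes> g \<otimes> t))"
proof -
  let ?R = "lcoset_reps G S"
  have "card S > 0"
    using subgroup.one_closed[OF S] finite_subset[OF subgroup.subset[OF S] fin] by (auto simp: card_gt_0_iff)
  have "(\<Sum>x\<in>carrier G. \<psi> (x \<otimes> g \<otimes> inv x)) = (\<Sum>x\<in>carrier G. \<psi> (inv x \<otimes> g \<otimes> x))"
    by (rule sum.reindex_bij_witness[where i="\<lambda>x. inv x" and j="\<lambda>x. inv x"]) auto
  also have "\<dots> = (\<Sum>(t, s)\<in>?R \<times> S. \<psi> (inv (t \<otimes> s) \<otimes> g \<otimes> (t \<otimes> s)))"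
    using sum.reindex_bij_betw[OF bij_betw_lcoset_reps_times[OF S], of "\<lambda>x. \<psi> (inv x \<otimes> g \<otimes> x)"]
    by (simp add: case_prod_unfold)
  also have "\<dots> = (\<Sum>(t, s)\<in>?R \<times> S. \<psi> (inv t \<otimes> g \<otimes> t))"
  proof (rule sum.cong[OF refl], clarify)
    fix t s assume ts: "t \<in> ?R" "s \<in> S"
    have c: "t \<in> carrier G" "s \<in> carrier G" using ts lcoset_reps_subset[OF S] S subgroup.mem_carrier by auto
    have "inv (t \<otimes> s) \<otimes> g \<otimes> (t \<otimes> s) = inv s \<otimes> (inv t \<otimes> g \<otimes> t) \<otimes> s"
      using c g by (simp add: inv_mult_group m_assoc)
    then show "\<psi> (inv (t \<otimes> s) \<otimes> g \<otimes> (t \<otimes> s)) = \<psi> (inv t \<otimes> g \<otimes> t)"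
      using linear_character_conj[OF ts(2)] c g by simp
  qed
  also have "\<dots> = of_nat (card S) * (\<Sum>t\<in>?R. \<psi> (inv t \<otimes> g \<otimes> t))"
    by (simp add: sum.cartesian_product[symmetric] sum_distrib_left mult.commute)
  finally show ?thesis
    using \<open>card S > 0\<close> g unfolding induce_def Let_def by simp
qed

text \<open>Only the representative of the coset containing the second factor contributes.\<close>

lemma sum_lcoset_reps_linear_character:
  assumes x: "x \<in> carrier G" and y: "y \<in> carrier G"
  shows "(\<Sum>t\<in>lcoset_reps G S. \<psi> (x \<otimes> t) * \<psi> (inv t \<otimes> y)) = \<psi> (x \<otimes> y)"
proof -
  let ?R = "lcoset_reps G S"
  have fin_R: "finite ?R" using finite_subset[OF lcoset_reps_subset[OF S] fin] .
  obtain t0 where t0: "t0 \<in> ?R" "inv t0 \<otimes> y \<in> S" using lcoset_reps_cover[OF S y] by blast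
  have t0c: "t0 \<in> carrier G" using t0 lcoset_reps_subset[OF S] by auto
  have "(\<Sum>t\<in>?R. \<psi> (x \<otimes> t) * \<psi> (inv t \<otimes> y)) = (\<Sum>t\<in>?R. if t0 = t then \<psi> (x \<otimes> t) * \<psi> (inv t \<otimes> y) else 0)"
  proof (rule sum.cong[OF refl])
    fix t assume "t \<in> ?R"
    then have "t \<noteq> t0 \<Longrightarrow> inv t \<otimes> y \<notin> S" using lcoset_reps_unique[OF S _ t0(1) y] t0(2) by blast
    then show "\<psi> (x \<otimes> t) * \<psi> (inv t \<otimes> y) = (if t0 = t then \<psi> (x \<otimes> t) * \<psi> (inv t \<otimes> y) else 0)"
      by (auto simp: linear_character_outside)
  qed
  also have "\<dots> = \<psi> (x \<otimes> t0) * \<psi> (inv t0 \<otimes> y)" using fin_R t0(1) by simp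
  also have "\<dots> = \<psi> ((x \<otimes> t0) \<otimes> (inv t0 \<otimes> y))"
    using linear_character_mult_right[OF _ t0(2)] x t0c by simp
  also have "(x \<otimes> t0) \<otimes> (inv t0 \<otimes> y) = x \<otimes> y" using x y t0c by (simp add: m_assoc)
  finally show ?thesis .
qed

theorem is_character_induce_linear_character: "is_character G (carrier G) (induce G S \<psi>)"
proof -
  let ?R = "lcoset_reps G S"
  define m where "m = card ?R"
  have "finite ?R" using finite_subset[OF lcoset_reps_subset[OF S] fin] .
  then obtain e where e: "bij_betw e {..<m} ?R"
    unfolding m_def using ex_bij_betw_nat_finite lessThan_atLeast0 by metis
  have eR: "e i \<in> ?R" and ec: "e i \<in> carrier G" if "i < m" for i
    using e that lcoset_reps_subset[OF S] bij_betwE by blast+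
  have e_inj: "e i = e j \<longleftrightarrow> i = j" if "i < m" "j < m" for i j
    using e that unfolding bij_betw_def inj_on_def by blast
  define \<rho> where "\<rho> = (\<lambda>g. mat m m (\<lambda>(i, j). \<psi> (inv (e i) \<otimes> g \<otimes> e j)))"
  have sum_e: "(\<Sum>j<m. f (e j)) = (\<Sum>t\<in>?R. f t)" for f :: "'a \<Rightarrow> complex"
    using sum.reindex_bij_betw[OF e] .
  show ?thesis unfolding is_character_def
  proof (intro exI[of _ m] exI[of _ \<rho>] conjI ballI allI)
    show "\<rho> \<one> = 1\<^sub>m m"
      unfolding \<rho>_def using linear_character_lcoset_reps[OF eR eR] e_inj ec
      by (intro eq_matI) auto
  next
    fix g h assume gh: "g \<in> carrier G" "h \<in> carrier G"
    show "\<rho> (g \<otimes> h) = \<rho> g * \<rho> h"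
    proof (rule eq_matI)
      fix i k assume "i < dim_row (\<rho> g * \<rho> h)" "k < dim_col (\<rho> g * \<rho> h)"
      then have ik: "i < m" "k < m" unfolding \<rho>_def by auto
      have "(\<rho> g * \<rho> h) $$ (i, k) = (\<Sum>j<m. \<psi> (inv (e i) \<otimes> g \<otimes> e j) * \<psi> (inv (e j) \<otimes> (h \<otimes> e k)))"
        using ik ec gh unfolding \<rho>_def by (simp add: scalar_prod_def atLeast0LessThan m_assoc)
      also have "\<dots> = (\<Sum>t\<in>?R. \<psi> ((inv (e i) \<otimes> g) \<otimes> t) * \<psi> (inv t \<otimes> (h \<otimes> e k)))"
        using sum_e[of "\<lambda>t. \<psi> ((inv (e i) \<otimes> g) \<otimes> t) * \<psi> (inv t \<otimes> (h \<otimes> e k))"] by simp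
      also have "\<dots> = \<psi> ((inv (e i) \<otimes> g) \<otimes> (h \<otimes> e k))"
        by (rule sum_lcoset_reps_linear_character) (use ik ec gh in auto)
      also have "\<dots> = \<rho> (g \<otimes> h) $$ (i, k)"
        using ik ec gh unfolding \<rho>_def by (simp add: m_assoc)
      finally show "\<rho> (g \<otimes> h) $$ (i, k) = (\<rho> g * \<rho> h) $$ (i, k)" ..
    qed (simp_all add: \<rho>_def)
  next
    fix g show "induce G S \<psi> g = (if g \<in> carrier G then mat_trace (\<rho> g) else 0)"
      using induce_linear_character_eq sum_e[of "\<lambda>t. \<psi> (inv t \<otimes> g \<otimes> t)"]
      unfolding \<rho>_def mat_trace_def by (simp add: induce_def)
  qed (simp add: \<rho>_def)
qed

end

end

end

context group begin

lemma card_mult_induce: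
  assumes "finite (carrier G)" "subgroup S G" "g \<in> carrier G"
  shows "of_nat (card S) * induce G S f g
       = (\<Sum>x\<in>carrier G. if x \<otimes> g \<otimes> inv x \<in> S then f (x \<otimes> g \<otimes> inv x) else 0)"
proof -
  have "card S > 0" using subgroup.finite_imp_card_positive[OF assms(2)] assms(1) by blast
  then show ?thesis unfolding induce_def Let_def using assms(3) by simp
qed

text \<open>Counting pairs (x, m) and substituting x := m \<otimes> x.\<close>

lemma sum_conj_count:
  fixes \<chi> :: "'a \<Rightarrow> complex"
  assumes fin: "finite (carrier G)" and L: "L \<subseteq> carrier G" and g: "g \<in> carrier G"
    and \<chi>: "\<And>m y. m \<in> carrier G \<Longrightarrow> y \<in> carrier G \<Longrightarrow> \<chi> (m \<otimes> y \<otimes> inv m) = \<chi> y"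
  shows "(\<Sum>x\<in>carrier G. \<chi> (x \<otimes> g \<otimes> inv x) * of_nat (card {m\<in>L. m \<otimes> (x \<otimes> g \<otimes> inv x) \<otimes> inv m \<in> H}))
       = of_nat (card L) * (\<Sum>x\<in>carrier G. if x \<otimes> g \<otimes> inv x \<in> H then \<chi> (x \<otimes> g \<otimes> inv x) else 0)"
proof -
  define F where "F x = (if x \<otimes> g \<otimes> inv x \<in> H then \<chi> (x \<otimes> g \<otimes> inv x) else 0)" for x
  have conj: "m \<otimes> (x \<otimes> g \<otimes> inv x) \<otimes> inv m = (m \<otimes> x) \<otimes> g \<otimes> inv (m \<otimes> x)"
    if "m \<in> carrier G" "x \<in> carrier G" for m x
    using that g by (simp add: m_assoc inv_mult_group)
  have "\<chi> (x \<otimes> g \<otimes> inv x) * of_nat (card {m\<in>L. m \<otimes> (x \<otimes> g \<otimes> inv x) \<otimes> inv m \<in> H}) = (\<Sum>m\<in>L. F (m \<otimes> x))"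
    if x: "x \<in> carrier G" for x
  proof -
    have "\<chi> (x \<otimes> g \<otimes> inv x) * of_nat (card {m\<in>L. m \<otimes> (x \<otimes> g \<otimes> inv x) \<otimes> inv m \<in> H})
        = (\<Sum>m\<in>L. if m \<otimes> (x \<otimes> g \<otimes> inv x) \<otimes> inv m \<in> H then \<chi> (x \<otimes> g \<otimes> inv x) else 0)"
      using finite_subset[OF L fin] by (simp add: sum.inter_filter[symmetric] mult.commute)
    also have "\<dots> = (\<Sum>m\<in>L. F (m \<otimes> x))"
      by (rule sum.cong[OF refl]) (use L x g \<chi> conj in \<open>auto simp: F_def\<close>)
    finally show ?thesis .
  qed
  then have "(\<Sum>x\<in>carrier G. \<chi> (x \<otimes> g \<otimes> inv x) * of_nat (card {m\<in>L. m \<otimes> (x \<otimes> g \<otimes> inv x) \<otimes> inv m \<in> H}))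
      = (\<Sum>m\<in>L. \<Sum>x\<in>carrier G. F (m \<otimes> x))"
    by (simp add: sum.swap[of _ L])
  also have "\<dots> = (\<Sum>m\<in>L. \<Sum>x\<in>carrier G. F x)"
  proof (rule sum.cong[OF refl])
    fix m assume "m \<in> L"
    then have "bij_betw (\<lambda>x. m \<otimes> x) (carrier G) (carrier G)"
      using L by (intro bij_betwI[where g="\<lambda>x. inv m \<otimes> x"]) auto
    then show "(\<Sum>x\<in>carrier G. F (m \<otimes> x)) = (\<Sum>x\<in>carrier G. F x)"
      by (rule sum.reindex_bij_betw)
  qed
  finally show ?thesis by (simp add: F_def)
qed


end

section \<open>Characters of L/(H \<inter> L)\<close>

locale abelian_modulo = group G for G (structure) +
  fixes H L
  assumes finite_carrier: "finite (carrier G)"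
    and H: "subgroup H G" and L: "subgroup L G"
    and normalizes: "\<And>h l. h \<in> H \<Longrightarrow> l \<in> L \<Longrightarrow> h \<otimes> l \<otimes> inv h \<in> L"
    and commutator_in: "\<And>a b. a \<in> L \<Longrightarrow> b \<in> L \<Longrightarrow> a \<otimes> b \<otimes> inv a \<otimes> inv b \<in> H"
begin

sublocale H: subgroup H G by (fact H)
sublocale L: subgroup L G by (fact L)

lemma finite_L: "finite L" and finite_H: "finite H"
  using finite_subset[OF L.subset finite_carrier] finite_subset[OF H.subset finite_carrier] .

lemma one_in_inter: "\<one> \<in> H \<inter> L"
  by simp

lemma commutator_in_inter: "a \<in> L \<Longrightarrow> b \<in> L \<Longrightarrow> a \<otimes> b \<otimes> inv a \<otimes> inv b \<in> H \<inter> L"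
  using commutator_in by simp

text \<open>The characters of the abelian group L/(H \<inter> L), as functions on G vanishing outside L.\<close>

definition quot_chars :: "('a \<Rightarrow> complex) set" where
  "quot_chars = {\<alpha>. multiplicative_on G L \<alpha> \<and> (\<forall>k\<in>H \<inter> L. \<alpha> k = 1) \<and> (\<forall>x. x \<notin> L \<longrightarrow> \<alpha> x = 0)}"

definition principal_quot_char :: "'a \<Rightarrow> complex" where
  "principal_quot_char x = (if x \<in> L then 1 else 0)"

context
  fixes \<alpha> assumes \<alpha>: "\<alpha> \<in> quot_chars"
begin

lemma quot_char_multiplicative: "multiplicative_on G L \<alpha>"
  and quot_char_inter: "k \<in> H \<Longrightarrow> k \<in> L \<Longrightarrow> \<alpha> k = 1"
  and quot_char_outside: "x \<notin> L \<Longrightarrow> \<alpha> x = 0"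
  using \<alpha> unfolding quot_chars_def by auto

lemma quot_char_mult: "x \<in> L \<Longrightarrow> y \<in> L \<Longrightarrow> \<alpha> (x \<otimes> y) = \<alpha> x * \<alpha> y"
  using quot_char_multiplicative by (rule multiplicative_onD)

lemma quot_char_one: "\<alpha> \<one> = 1"
  by (simp add: quot_char_inter)

lemma quot_char_inv: "x \<in> L \<Longrightarrow> \<alpha> x * \<alpha> (inv x) = 1"
  using quot_char_mult[of x "inv x"] quot_char_one by simp

lemma quot_char_nonzero: "x \<in> L \<Longrightarrow> \<alpha> x \<noteq> 0"
  using quot_char_inv by fastforce

end

lemma principal_quot_char: "principal_quot_char \<in> quot_chars"
  unfolding quot_chars_def principal_quot_char_def multiplicative_on_def by auto

lemma quot_chars_mult_closed:
  "\<alpha> \<in> quot_chars \<Longrightarrow> \<beta> \<in> quot_chars \<Longrightarrow> (\<lambda>x. \<alpha> x * \<beta> x) \<in> quot_chars"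
  unfolding quot_chars_def multiplicative_on_def by auto

lemma finite_quot_chars: "finite quot_chars"
proof -
  let ?R = "{z::complex. z ^ order G = 1}"
  have fin_R: "finite ?R"
    by (rule finite_roots_unity) (use finite_carrier order_gt_0_iff_finite in simp)
  have sub: "quot_chars \<subseteq> (\<lambda>f x. if x \<in> L then f x else 0) ` (L \<rightarrow>\<^sub>E ?R)"
  proof
    fix \<alpha> assume \<alpha>: "\<alpha> \<in> quot_chars"
    have "restrict \<alpha> L \<in> L \<rightarrow>\<^sub>E ?R"
      using multiplicative_on_root_of_unity[OF L quot_char_multiplicative[OF \<alpha>] quot_char_one[OF \<alpha>]] by auto
    moreover have "\<alpha> = (\<lambda>x. if x \<in> L then restrict \<alpha> L x else 0)"
      using quot_char_outside[OF \<alpha>] by auto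
    ultimately show "\<alpha> \<in> (\<lambda>f x. if x \<in> L then f x else 0) ` (L \<rightarrow>\<^sub>E ?R)" by blast
  qed
  have "finite (L \<rightarrow>\<^sub>E ?R)" using finite_L fin_R by (rule finite_PiE)
  then show ?thesis by (rule finite_subset[OF sub finite_imageI])
qed

definition min_pow_in :: "'a set \<Rightarrow> 'a \<Rightarrow> nat" where
  "min_pow_in U w = (LEAST r. 0 < r \<and> w [^] r \<in> U)"

lemma min_pow_in:
  assumes "\<one> \<in> U" "w \<in> carrier G"
  shows "0 < min_pow_in U w" "w [^] min_pow_in U w \<in> U"
proof -
  have "0 < order G \<and> w [^] order G \<in> U"
    using finite_carrier order_gt_0_iff_finite pow_order_eq_1[OF assms(2)] assms(1) by simp
  then have "0 < min_pow_in U w \<and> w [^] min_pow_in U w \<in> U"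
    unfolding min_pow_in_def by (rule LeastI)
  then show "0 < min_pow_in U w" "w [^] min_pow_in U w \<in> U" by auto
qed

lemma pow_notin_below_min_pow_in: "0 < s \<Longrightarrow> s < min_pow_in U w \<Longrightarrow> w [^] s \<notin> U"
  unfolding min_pow_in_def using not_less_Least by blast

definition adjoin :: "'a set \<Rightarrow> 'a \<Rightarrow> 'a set" where
  "adjoin U w = {x \<in> carrier G. \<exists>i::nat. inv (w [^] i) \<otimes> x \<in> U}"

text \<open>The extension of \<beta> from U to adjoin U w sending w to c. It is well defined as soon as
  c ^ r = \<beta> (w ^ r) for the least r > 0 with w ^ r \<in> U.\<close>

definition adjoin_char :: "'a set \<Rightarrow> ('a \<Rightarrow> complex) \<Rightarrow> 'a \<Rightarrow> complex \<Rightarrow> 'a \<Rightarrow> complex" where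
  "adjoin_char U \<beta> w c x =
     (if x \<in> adjoin U w
      then (let i = SOME i::nat. inv (w [^] i) \<otimes> x \<in> U in c ^ i * \<beta> (inv (w [^] i) \<otimes> x))
      else 0)"

context
  fixes U and \<beta> :: "'a \<Rightarrow> complex"
  assumes U: "subgroup U G" and inter_U: "H \<inter> L \<subseteq> U" and U_L: "U \<subseteq> L"
    and \<beta>: "multiplicative_on G U \<beta>" and \<beta>_inter: "\<And>k. k \<in> H \<inter> L \<Longrightarrow> \<beta> k = 1"
begin

lemma U_char_one: "\<beta> \<one> = 1"
  using \<beta>_inter one_in_inter by blast

lemma U_char_inv: "x \<in> U \<Longrightarrow> \<beta> x * \<beta> (inv x) = 1"
  using multiplicative_onD[OF \<beta>, of x "inv x"] subgroup.m_inv_closed[OF U]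
    subgroup.mem_carrier[OF U] U_char_one by simp

text \<open>Conjugating by L changes an element of U by a commutator, which lies in H \<inter> L.\<close>

lemma conj_in_U:
  assumes a: "a \<in> L" and u: "u \<in> U"
  shows "a \<otimes> u \<otimes> inv a \<in> U" "\<beta> (a \<otimes> u \<otimes> inv a) = \<beta> u"
proof -
  have uL: "u \<in> L" using u U_L by blast
  have k: "a \<otimes> u \<otimes> inv a \<otimes> inv u \<in> H \<inter> L" by (rule commutator_in_inter[OF a uL])
  then have kU: "a \<otimes> u \<otimes> inv a \<otimes> inv u \<in> U" using inter_U by blast
  have e: "a \<otimes> u \<otimes> inv a = (a \<otimes> u \<otimes> inv a \<otimes> inv u) \<otimes> u" using a uL by simp
  show "a \<otimes> u \<otimes> inv a \<in> U" using subgroup.m_closed[OF U kU u] e by simp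
  show "\<beta> (a \<otimes> u \<otimes> inv a) = \<beta> u"
    using multiplicative_onD[OF \<beta> kU u] \<beta>_inter[OF k] e by simp
qed

context
  fixes w c
  assumes w: "w \<in> L" and c: "c ^ min_pow_in U w = \<beta> (w [^] min_pow_in U w)"
begin

lemma c_pow_eq_char_pow:
  assumes d: "w [^] (d::nat) \<in> U" shows "c ^ d = \<beta> (w [^] d)"
proof -
  let ?r = "min_pow_in U w"
  have wc: "w \<in> carrier G" using w by simp
  have r: "0 < ?r" "w [^] ?r \<in> U" using min_pow_in[OF subgroup.one_closed[OF U] wc] by auto
  define q where "q = d div ?r"
  define s where "s = d mod ?r"
  have ds: "d = ?r * q + s" unfolding q_def s_def by simp
  have wrq: "(w [^] ?r) [^] q \<in> U" using subgroup_nat_pow_closed[OF U r(2)] .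
  have "w [^] d = (w [^] ?r) [^] q \<otimes> w [^] s" using wc ds by (simp add: nat_pow_pow nat_pow_mult)
  then have "w [^] s = inv ((w [^] ?r) [^] q) \<otimes> w [^] d" using wc by simp
  then have "w [^] s \<in> U" using subgroup.m_closed[OF U subgroup.m_inv_closed[OF U wrq] d] by simp
  moreover have "s < ?r" unfolding s_def using r(1) by simp
  ultimately have "s = 0" using pow_notin_below_min_pow_in[of s U w] by (cases "s = 0") simp_all
  then have dq: "d = ?r * q" using ds by simp
  have "c ^ d = \<beta> (w [^] ?r) ^ q" unfolding dq by (simp add: power_mult c)
  also have "\<dots> = \<beta> ((w [^] ?r) [^] q)" using multiplicative_on_pow[OF U \<beta> U_char_one r(2)] by simp
  also have "\<dots> = \<beta> (w [^] d)" unfolding dq using wc by (simp add: nat_pow_pow)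
  finally show ?thesis .
qed

lemma adjoin_char_well_defined:
  assumes x: "x \<in> carrier G" and i: "inv (w [^] (i::nat)) \<otimes> x \<in> U" and j: "inv (w [^] (j::nat)) \<otimes> x \<in> U"
  shows "c ^ i * \<beta> (inv (w [^] i) \<otimes> x) = c ^ j * \<beta> (inv (w [^] j) \<otimes> x)"
proof -
  have *: "c ^ i * \<beta> (inv (w [^] i) \<otimes> x) = c ^ j * \<beta> (inv (w [^] j) \<otimes> x)"
    if x: "x \<in> carrier G" and i: "inv (w [^] (i::nat)) \<otimes> x \<in> U"
      and j: "inv (w [^] (j::nat)) \<otimes> x \<in> U" and ij: "i \<le> j" for i j
  proof -
    define d where "d = j - i"
    have wc: "w [^] i \<in> carrier G" "w [^] d \<in> carrier G" using w by simp_all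
    have wj: "w [^] j = w [^] i \<otimes> w [^] d" unfolding d_def using ij w by (simp add: nat_pow_mult)
    have "(inv (w [^] i) \<otimes> x) \<otimes> inv (inv (w [^] j) \<otimes> x) = w [^] d"
      using wc x by (simp add: wj inv_mult_group m_assoc)
    then have dU: "w [^] d \<in> U"
      using subgroup.m_closed[OF U i subgroup.m_inv_closed[OF U j]] by simp
    have e: "inv (w [^] j) \<otimes> x = inv (w [^] d) \<otimes> (inv (w [^] i) \<otimes> x)"
      using wc x by (simp add: wj inv_mult_group m_assoc)
    have "c ^ j * \<beta> (inv (w [^] j) \<otimes> x) = c ^ i * c ^ d * (\<beta> (inv (w [^] d)) * \<beta> (inv (w [^] i) \<otimes> x))"
      unfolding e using multiplicative_onD[OF \<beta> subgroup.m_inv_closed[OF U dU] i] ij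
      by (simp add: d_def power_add[symmetric])
    also have "\<dots> = c ^ i * \<beta> (inv (w [^] i) \<otimes> x) * (\<beta> (w [^] d) * \<beta> (inv (w [^] d)))"
      using c_pow_eq_char_pow[OF dU] by (simp add: algebra_simps)
    also have "\<dots> = c ^ i * \<beta> (inv (w [^] i) \<otimes> x)" using U_char_inv[OF dU] by simp
    finally show ?thesis by simp
  qed
  show ?thesis
  proof (cases "i \<le> j")
    case False
    then have "j \<le> i" by simp
    then show ?thesis by (rule *[OF x j i, symmetric])
  qed (rule *[OF x i j])
qed

lemma adjoin_char_eq:
  assumes x: "x \<in> carrier G" and i: "inv (w [^] (i::nat)) \<otimes> x \<in> U"
  shows "adjoin_char U \<beta> w c x = c ^ i * \<beta> (inv (w [^] i) \<otimes> x)"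
proof -
  let ?j = "SOME i::nat. inv (w [^] i) \<otimes> x \<in> U"
  have "inv (w [^] ?j) \<otimes> x \<in> U" using i by (rule someI)
  moreover have "x \<in> adjoin U w" unfolding adjoin_def using x i by blast
  ultimately have "adjoin_char U \<beta> w c x = c ^ ?j * \<beta> (inv (w [^] ?j) \<otimes> x)"
    unfolding adjoin_char_def Let_def by simp
  also have "\<dots> = c ^ i * \<beta> (inv (w [^] i) \<otimes> x)"
    by (rule adjoin_char_well_defined[OF x \<open>inv (w [^] ?j) \<otimes> x \<in> U\<close> i])
  finally show ?thesis .
qed

lemma adjoin_subset_L: "adjoin U w \<subseteq> L"
proof
  fix x assume "x \<in> adjoin U w"
  then obtain i::nat where x: "x \<in> carrier G" and i: "inv (w [^] i) \<otimes> x \<in> U"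
    unfolding adjoin_def by blast
  have "w [^] i \<otimes> (inv (w [^] i) \<otimes> x) \<in> L"
    using L.m_closed[OF subgroup_nat_pow_closed[OF L w] subsetD[OF U_L i]] .
  then show "x \<in> L" using x w by simp
qed

lemma subset_adjoin: "U \<subseteq> adjoin U w"
  unfolding adjoin_def using subgroup.mem_carrier[OF U] by (auto intro!: exI[of _ 0])

lemma in_adjoin: "w \<in> adjoin U w"
  unfolding adjoin_def using w subgroup.one_closed[OF U] by (auto intro!: exI[of _ 1])

lemma adjoin_mult:
  assumes x: "x \<in> adjoin U w" and y: "y \<in> adjoin U w"
  shows "x \<otimes> y \<in> adjoin U w"
    "adjoin_char U \<beta> w c (x \<otimes> y) = adjoin_char U \<beta> w c x * adjoin_char U \<beta> w c y"
proof -
  obtain i::nat where xc: "x \<in> carrier G" and u: "inv (w [^] i) \<otimes> x \<in> U"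
    using x unfolding adjoin_def by blast
  obtain j::nat where yc: "y \<in> carrier G" and v: "inv (w [^] j) \<otimes> y \<in> U"
    using y unfolding adjoin_def by blast
  define a where "a = inv (w [^] j)"
  have a: "a \<in> L" unfolding a_def using subgroup_nat_pow_closed[OF L w] by simp
  have "inv (w [^] (i + j)) \<otimes> (x \<otimes> y) = (a \<otimes> (inv (w [^] i) \<otimes> x) \<otimes> inv a) \<otimes> (inv (w [^] j) \<otimes> y)"
  proof -
    have "w [^] (i + j) = w [^] i \<otimes> w [^] j" using w by (simp add: nat_pow_mult)
    then show ?thesis unfolding a_def using w xc yc by (simp add: inv_mult_group m_assoc)
  qed
  note e = this
  have conj: "a \<otimes> (inv (w [^] i) \<otimes> x) \<otimes> inv a \<in> U"
    "\<beta> (a \<otimes> (inv (w [^] i) \<otimes> x) \<otimes> inv a) = \<beta> (inv (w [^] i) \<otimes> x)"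
    using conj_in_U[OF a u] by auto
  have m: "inv (w [^] (i + j)) \<otimes> (x \<otimes> y) \<in> U" unfolding e by (rule subgroup.m_closed[OF U conj(1) v])
  then show "x \<otimes> y \<in> adjoin U w" unfolding adjoin_def using xc yc by blast
  have "adjoin_char U \<beta> w c (x \<otimes> y) = c ^ (i + j) * \<beta> (inv (w [^] (i + j)) \<otimes> (x \<otimes> y))"
    using adjoin_char_eq[OF _ m] xc yc by simp
  also have "\<dots> = c ^ i * \<beta> (inv (w [^] i) \<otimes> x) * (c ^ j * \<beta> (inv (w [^] j) \<otimes> y))"
    unfolding e using multiplicative_onD[OF \<beta> conj(1) v] conj(2) by (simp add: power_add)
  also have "\<dots> = adjoin_char U \<beta> w c x * adjoin_char U \<beta> w c y"
    using adjoin_char_eq[OF xc u] adjoin_char_eq[OF yc v] by simp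
  finally show "adjoin_char U \<beta> w c (x \<otimes> y) = adjoin_char U \<beta> w c x * adjoin_char U \<beta> w c y" .
qed

lemma extend_char_by_element:
  "\<exists>U' \<beta>'. subgroup U' G \<and> U \<subseteq> U' \<and> U' \<subseteq> L \<and> w \<in> U' \<and> multiplicative_on G U' \<beta>' \<and>
     (\<forall>x\<in>U. \<beta>' x = \<beta> x) \<and> \<beta>' w = c"
proof (intro exI conjI)
  show "subgroup (adjoin U w) G"
  proof (rule finite_subgroupI[OF finite_carrier])
    show "adjoin U w \<subseteq> carrier G" unfolding adjoin_def by blast
    show "\<one> \<in> adjoin U w" using subset_adjoin subgroup.one_closed[OF U] by blast
  qed (rule adjoin_mult(1))
  show "multiplicative_on G (adjoin U w) (adjoin_char U \<beta> w c)"
    unfolding multiplicative_on_def using adjoin_mult(2) by blast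
  show "\<forall>x\<in>U. adjoin_char U \<beta> w c x = \<beta> x"
    using adjoin_char_eq[of _ 0] subgroup.mem_carrier[OF U] by simp
  show "adjoin_char U \<beta> w c w = c"
    using adjoin_char_eq[of w 1] w subgroup.one_closed[OF U] U_char_one by simp
qed (use subset_adjoin adjoin_subset_L in_adjoin in auto)

end

end

lemma extend_to_quot_char:
  assumes "subgroup U G" "H \<inter> L \<subseteq> U" "U \<subseteq> L" "multiplicative_on G U \<beta>"
    and "\<And>k. k \<in> H \<inter> L \<Longrightarrow> \<beta> k = 1"
  shows "\<exists>\<alpha>\<in>quot_chars. \<forall>x\<in>U. \<alpha> x = \<beta> x"
  using assms
proof (induction "card (L - U)" arbitrary: U \<beta> rule: less_induct)
  case less
  show ?case
  proof (cases "U = L")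
    case True
    define \<alpha> where "\<alpha> x = (if x \<in> L then \<beta> x else 0)" for x
    have "\<alpha> \<in> quot_chars"
      using less.prems True unfolding quot_chars_def \<alpha>_def multiplicative_on_def by auto
    moreover have "\<forall>x\<in>U. \<alpha> x = \<beta> x" using True by (simp add: \<alpha>_def)
    ultimately show ?thesis by blast
  next
    case False
    then obtain w where w: "w \<in> L" "w \<notin> U" using less.prems(3) by blast
    have "0 < min_pow_in U w" using min_pow_in subgroup.one_closed[OF less.prems(1)] w(1) by simp
    then obtain c where c: "c ^ min_pow_in U w = \<beta> (w [^] min_pow_in U w)"
      using complex_root_exists by blast
    obtain U' \<beta>' where U': "subgroup U' G" "U \<subseteq> U'" "U' \<subseteq> L" "w \<in> U'"
      "multiplicative_on G U' \<beta>'" "\<forall>x\<in>U. \<beta>' x = \<beta> x"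
      using extend_char_by_element[OF less.prems(1-5) w(1) c] by blast
    have lt: "card (L - U') < card (L - U)"
      by (rule psubset_card_mono) (use finite_L U' w in auto)
    have inter: "\<And>k. k \<in> H \<inter> L \<Longrightarrow> \<beta>' k = 1" using U'(6) less.prems(2,5) by auto
    obtain \<alpha> where \<alpha>: "\<alpha> \<in> quot_chars" and \<alpha>_U': "\<forall>x\<in>U'. \<alpha> x = \<beta>' x"
      using less.hyps[OF lt U'(1) subset_trans[OF less.prems(2) U'(2)] U'(3) U'(5) inter] by blast
    have "\<forall>x\<in>U. \<alpha> x = \<beta> x" using \<alpha>_U' U'(2,6) by auto
    with \<alpha> show ?thesis by blast
  qed
qed

lemma quot_char_separates:
  assumes v: "v \<in> L" "v \<notin> H" shows "\<exists>\<alpha>\<in>quot_chars. \<alpha> v \<noteq> 1"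
proof -
  let ?r = "min_pow_in (H \<inter> L) v"
  have sub: "subgroup (H \<inter> L) G" by (rule subgroups_Inter_pair[OF H L])
  have r: "0 < ?r" "v [^] ?r \<in> H \<inter> L" using min_pow_in[OF one_in_inter] v by auto
  have "?r \<noteq> 1" using r(2) v by auto
  then obtain c :: complex where c: "c ^ ?r = 1" "c \<noteq> 1"
    using nontrivial_root_of_unity[of ?r] r(1) by auto
  have "multiplicative_on G (H \<inter> L) (\<lambda>_. 1::complex)" by (simp add: multiplicative_on_def)
  from extend_char_by_element[OF sub subset_refl Int_lower2 this _ v(1), of c] c(1)
  obtain U \<beta> where U: "subgroup U G" "H \<inter> L \<subseteq> U" "U \<subseteq> L" "v \<in> U"
    "multiplicative_on G U \<beta>" "\<forall>x\<in>H \<inter> L. \<beta> x = 1" "\<beta> v = c"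
    by auto
  obtain \<alpha> where \<alpha>: "\<alpha> \<in> quot_chars" and \<alpha>_U: "\<forall>x\<in>U. \<alpha> x = \<beta> x"
    using extend_to_quot_char[OF U(1-3,5)] U(6) by blast
  have "\<alpha> v \<noteq> 1" using \<alpha>_U U(4,7) c(2) by auto
  with \<alpha> show ?thesis by blast
qed

text \<open>Multiplying by a character that is not 1 at z permutes the characters.\<close>

lemma sum_quot_chars:
  assumes z: "z \<in> L"
  shows "(\<Sum>\<alpha>\<in>quot_chars. \<alpha> z) = (if z \<in> H then of_nat (card quot_chars) else 0)"
proof (cases "z \<in> H")
  case True
  have "(\<Sum>\<alpha>\<in>quot_chars. \<alpha> z) = (\<Sum>\<alpha>\<in>quot_chars. 1)"
    by (rule sum.cong) (use True z quot_char_inter in auto)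
  then show ?thesis using True by simp
next
  case False
  obtain \<alpha>0 where \<alpha>0: "\<alpha>0 \<in> quot_chars" "\<alpha>0 z \<noteq> 1" using quot_char_separates[OF z False] by blast
  define f where "f \<alpha> = (\<lambda>x. \<alpha>0 x * \<alpha> x)" for \<alpha> :: "'a \<Rightarrow> complex"
  have inj: "inj_on f quot_chars"
  proof (rule inj_onI, rule ext)
    fix \<alpha> \<beta> x assume \<alpha>\<beta>: "\<alpha> \<in> quot_chars" "\<beta> \<in> quot_chars" "f \<alpha> = f \<beta>"
    show "\<alpha> x = \<beta> x"
    proof (cases "x \<in> L")
      case True
      then show ?thesis using fun_cong[OF \<alpha>\<beta>(3), of x] quot_char_nonzero[OF \<alpha>0(1)] by (simp add: f_def)
    qed (simp add: quot_char_outside[OF \<alpha>\<beta>(1)] quot_char_outside[OF \<alpha>\<beta>(2)])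
  qed
  have "f ` quot_chars = quot_chars"
    by (rule endo_inj_surj[OF finite_quot_chars _ inj]) (use quot_chars_mult_closed \<alpha>0 in \<open>auto simp: f_def\<close>)
  then have "(\<Sum>\<alpha>\<in>quot_chars. \<alpha> z) = (\<Sum>\<alpha>\<in>quot_chars. f \<alpha> z)"
    using sum.reindex[OF inj, of "\<lambda>\<alpha>. \<alpha> z"] by simp
  also have "\<dots> = \<alpha>0 z * (\<Sum>\<alpha>\<in>quot_chars. \<alpha> z)" by (simp add: f_def sum_distrib_left)
  finally have "(1 - \<alpha>0 z) * (\<Sum>\<alpha>\<in>quot_chars. \<alpha> z) = 0" by (simp add: algebra_simps)
  then show ?thesis using \<alpha>0 False by simp
qed

lemma card_quot_chars: "card quot_chars * card (H \<inter> L) = card L"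
proof -
  let ?A = quot_chars
  have "of_nat (card ?A * card (H \<inter> L)) = (\<Sum>z\<in>L. if z \<in> H then of_nat (card ?A) else (0::complex))"
    using finite_L by (simp add: sum.If_cases Int_commute)
  also have "\<dots> = (\<Sum>z\<in>L. \<Sum>\<alpha>\<in>?A. \<alpha> z)" by (rule sum.cong) (simp_all add: sum_quot_chars)
  also have "\<dots> = (\<Sum>\<alpha>\<in>?A. if \<alpha> = principal_quot_char then of_nat (card L) else 0)"
  proof (subst sum.swap, rule sum.cong[OF refl])
    fix \<alpha> assume \<alpha>: "\<alpha> \<in> ?A"
    have "(\<forall>m\<in>L. \<alpha> m = 1) \<longleftrightarrow> \<alpha> = principal_quot_char"
      using quot_char_outside[OF \<alpha>] unfolding principal_quot_char_def by (auto simp: fun_eq_iff)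
    then show "(\<Sum>z\<in>L. \<alpha> z) = (if \<alpha> = principal_quot_char then of_nat (card L) else 0)"
      using sum_multiplicative_on[OF L quot_char_multiplicative[OF \<alpha>]] by simp
  qed
  also have "\<dots> = of_nat (card L)" using finite_quot_chars principal_quot_char by simp
  finally show ?thesis by (simp only: of_nat_eq_iff)
qed

end

section \<open>Extending characters to L <#> stab \<alpha>\<close>

lemma set_mult_mem_iff: "x \<in> A <#>\<^bsub>G\<^esub> B \<longleftrightarrow> (\<exists>a\<in>A. \<exists>b\<in>B. x = a \<otimes>\<^bsub>G\<^esub> b)"
  unfolding set_mult_def by blast

context abelian_modulo begin

definition stab :: "('a \<Rightarrow> complex) \<Rightarrow> 'a set" where
  "stab \<alpha> = {h \<in> H. \<forall>l\<in>L. \<alpha> (h \<otimes> l \<otimes> inv h) = \<alpha> l}"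

text \<open>On L <#> stab \<alpha> the character \<alpha> extends by \<alpha> (l \<otimes> h) = \<alpha> l; the choice of l is
  irrelevant because two choices differ by an element of H \<inter> L.\<close>

definition ext_char :: "('a \<Rightarrow> complex) \<Rightarrow> 'a \<Rightarrow> complex" where
  "ext_char \<alpha> y = (if y \<in> L <#> stab \<alpha> then \<alpha> (SOME l. l \<in> L \<and> (\<exists>h\<in>stab \<alpha>. y = l \<otimes> h)) else 0)"

lemma stab_subset: "stab \<alpha> \<subseteq> H"
  unfolding stab_def by blast

lemma stab_principal_quot_char: "stab principal_quot_char = H"
  unfolding stab_def principal_quot_char_def using normalizes by auto

lemma inter_subset_stab:
  assumes \<alpha>: "\<alpha> \<in> quot_chars" shows "H \<inter> L \<subseteq> stab \<alpha>"
proof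
  fix k assume k: "k \<in> H \<inter> L"
  have "\<alpha> (k \<otimes> l \<otimes> inv k) = \<alpha> l" if l: "l \<in> L" for l
  proof -
    have c: "k \<otimes> l \<otimes> inv k \<otimes> inv l \<in> H \<inter> L" using commutator_in_inter k l by blast
    have "k \<otimes> l \<otimes> inv k = (k \<otimes> l \<otimes> inv k \<otimes> inv l) \<otimes> l" using k l by simp
    then show ?thesis using quot_char_mult[OF \<alpha> _ l, of "k \<otimes> l \<otimes> inv k \<otimes> inv l"] c
      quot_char_inter[OF \<alpha>] by simp
  qed
  then show "k \<in> stab \<alpha>" unfolding stab_def using k by blast
qed

lemma stab_mult_closed:
  assumes h: "h1 \<in> stab \<alpha>" "h2 \<in> stab \<alpha>" shows "h1 \<otimes> h2 \<in> stab \<alpha>"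
proof -
  have hH: "h1 \<in> H" "h2 \<in> H" using h stab_subset by auto
  have "\<alpha> ((h1 \<otimes> h2) \<otimes> l \<otimes> inv (h1 \<otimes> h2)) = \<alpha> l" if l: "l \<in> L" for l
  proof -
    have "(h1 \<otimes> h2) \<otimes> l \<otimes> inv (h1 \<otimes> h2) = h1 \<otimes> (h2 \<otimes> l \<otimes> inv h2) \<otimes> inv h1"
      using hH l by (simp add: inv_mult_group m_assoc)
    then show ?thesis using h normalizes[OF hH(2) l] l unfolding stab_def by simp
  qed
  then show ?thesis unfolding stab_def using hH by blast
qed

lemma set_mult_L_mult_closed:
  assumes K: "K \<subseteq> H" "\<And>h1 h2. h1 \<in> K \<Longrightarrow> h2 \<in> K \<Longrightarrow> h1 \<otimes> h2 \<in> K"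
    and y: "y1 \<in> L <#> K" "y2 \<in> L <#> K"
  shows "y1 \<otimes> y2 \<in> L <#> K"
proof -
  obtain l1 h1 l2 h2 where lh: "l1 \<in> L" "h1 \<in> K" "y1 = l1 \<otimes> h1" "l2 \<in> L" "h2 \<in> K" "y2 = l2 \<otimes> h2"
    using y unfolding set_mult_mem_iff by blast
  have hH: "h1 \<in> H" "h2 \<in> H" using lh K(1) by auto
  have "y1 \<otimes> y2 = (l1 \<otimes> (h1 \<otimes> l2 \<otimes> inv h1)) \<otimes> (h1 \<otimes> h2)"
    using lh hH by (simp add: m_assoc)
  moreover have "l1 \<otimes> (h1 \<otimes> l2 \<otimes> inv h1) \<in> L" using normalizes[OF hH(1) lh(4)] lh(1) by simp
  ultimately show ?thesis unfolding set_mult_mem_iff using K(2)[OF lh(2,5)] by blast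
qed

lemma subgroup_set_mult_L:
  assumes "K \<subseteq> H" "\<one> \<in> K" "\<And>h1 h2. h1 \<in> K \<Longrightarrow> h2 \<in> K \<Longrightarrow> h1 \<otimes> h2 \<in> K"
  shows "subgroup (L <#> K) G"
proof (rule finite_subgroupI[OF finite_carrier])
  show "L <#> K \<subseteq> carrier G"
  proof
    fix x assume "x \<in> L <#> K"
    then obtain l k where "l \<in> L" "k \<in> K" "x = l \<otimes> k" unfolding set_mult_mem_iff by blast
    moreover have "k \<in> H" using assms(1) \<open>k \<in> K\<close> by blast
    ultimately show "x \<in> carrier G" by simp
  qed
  show "\<one> \<in> L <#> K" using assms(2) unfolding set_mult_mem_iff by (auto intro!: bexI[of _ \<one>])
qed (rule set_mult_L_mult_closed[OF assms(1,3)])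

lemma subgroup_L_stab:
  assumes "\<alpha> \<in> quot_chars" shows "subgroup (L <#> stab \<alpha>) G"
  by (rule subgroup_set_mult_L[OF stab_subset])
    (use inter_subset_stab[OF assms] stab_mult_closed in auto)

lemma subgroup_LH: "subgroup (L <#> H) G"
  using subgroup_L_stab[OF principal_quot_char] by (simp add: stab_principal_quot_char)

lemma LH_decomp_unique:
  assumes "l \<in> L" "l' \<in> L" "h \<in> H" "h' \<in> H" "l \<otimes> h = l' \<otimes> h'"
  shows "inv l' \<otimes> l \<in> H \<inter> L" "h' = (inv l' \<otimes> l) \<otimes> h"
proof -
  have e: "inv l' \<otimes> l = h' \<otimes> inv h"
  proof -
    have "inv l' \<otimes> (l \<otimes> h) \<otimes> inv h = inv l' \<otimes> (l' \<otimes> h') \<otimes> inv h" using assms(5) by simp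
    then show ?thesis using assms(1-4) by (simp add: m_assoc)
  qed
  have "inv l' \<otimes> l \<in> L" "h' \<otimes> inv h \<in> H" using assms by simp_all
  then show "inv l' \<otimes> l \<in> H \<inter> L" using e by (metis IntI)
  show "h' = (inv l' \<otimes> l) \<otimes> h" unfolding e using assms by simp
qed

lemma ext_char_eq:
  assumes \<alpha>: "\<alpha> \<in> quot_chars" and l: "l \<in> L" and h: "h \<in> H"
  shows "ext_char \<alpha> (l \<otimes> h) = (if h \<in> stab \<alpha> then \<alpha> l else 0)"
proof (cases "h \<in> stab \<alpha>")
  case True
  let ?l = "SOME l'. l' \<in> L \<and> (\<exists>h'\<in>stab \<alpha>. l \<otimes> h = l' \<otimes> h')"
  have "?l \<in> L \<and> (\<exists>h'\<in>stab \<alpha>. l \<otimes> h = ?l \<otimes> h')"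
    by (rule someI[of _ l]) (use l True in blast)
  then obtain h' where l': "?l \<in> L" "h' \<in> stab \<alpha>" "l \<otimes> h = ?l \<otimes> h'" by blast
  have k: "inv ?l \<otimes> l \<in> H \<inter> L"
    using LH_decomp_unique(1)[OF l l'(1) h _ l'(3)] l'(2) stab_subset by blast
  have "\<alpha> l = \<alpha> (?l \<otimes> (inv ?l \<otimes> l))" using l l'(1) by simp
  also have "\<dots> = \<alpha> ?l" using quot_char_mult[OF \<alpha> l'(1)] quot_char_inter[OF \<alpha>] k by simp
  finally show ?thesis
    unfolding ext_char_def using True l by (auto simp: set_mult_mem_iff)
next
  case False
  have "l \<otimes> h \<notin> L <#> stab \<alpha>"
  proof
    assume "l \<otimes> h \<in> L <#> stab \<alpha>"
    then obtain l' h' where l': "l' \<in> L" "h' \<in> stab \<alpha>" "l \<otimes> h = l' \<otimes> h'"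
      unfolding set_mult_mem_iff by blast
    have h'H: "h' \<in> H" using l'(2) stab_subset by blast
    have "h = (inv l \<otimes> l') \<otimes> h'" "inv l \<otimes> l' \<in> H \<inter> L"
      using LH_decomp_unique[OF l'(1) l h'H h l'(3)[symmetric]] by auto
    then have "h \<in> stab \<alpha>" using stab_mult_closed l'(2) inter_subset_stab[OF \<alpha>] by auto
    then show False using False by simp
  qed
  then show ?thesis unfolding ext_char_def using False by simp
qed

lemma ext_char_outside: "y \<notin> L <#> stab \<alpha> \<Longrightarrow> ext_char \<alpha> y = 0"
  unfolding ext_char_def by simp

lemma ext_char_mult:
  assumes \<alpha>: "\<alpha> \<in> quot_chars" and y: "y1 \<in> L <#> stab \<alpha>" "y2 \<in> L <#> stab \<alpha>"
  shows "ext_char \<alpha> (y1 \<otimes> y2) = ext_char \<alpha> y1 * ext_char \<alpha> y2"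
proof -
  obtain l1 h1 l2 h2 where lh: "l1 \<in> L" "h1 \<in> stab \<alpha>" "y1 = l1 \<otimes> h1" "l2 \<in> L" "h2 \<in> stab \<alpha>" "y2 = l2 \<otimes> h2"
    using y unfolding set_mult_mem_iff by blast
  have hH: "h1 \<in> H" "h2 \<in> H" using lh stab_subset by auto
  have l2': "h1 \<otimes> l2 \<otimes> inv h1 \<in> L" by (rule normalizes[OF hH(1) lh(4)])
  have "y1 \<otimes> y2 = (l1 \<otimes> (h1 \<otimes> l2 \<otimes> inv h1)) \<otimes> (h1 \<otimes> h2)"
    using lh hH by (simp add: m_assoc)
  then have "ext_char \<alpha> (y1 \<otimes> y2) = \<alpha> (l1 \<otimes> (h1 \<otimes> l2 \<otimes> inv h1))"
    using ext_char_eq[OF \<alpha> _ H.m_closed[OF hH]] stab_mult_closed[OF lh(2,5)] lh(1) l2' by simp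
  also have "\<dots> = \<alpha> l1 * \<alpha> l2"
    using quot_char_mult[OF \<alpha> lh(1) l2'] lh(2,4) unfolding stab_def by simp
  also have "\<dots> = ext_char \<alpha> y1 * ext_char \<alpha> y2"
    using ext_char_eq[OF \<alpha>] lh hH by simp
  finally show ?thesis .
qed

lemma is_linear_character_ext_char:
  assumes \<alpha>: "\<alpha> \<in> quot_chars" and \<chi>: "is_linear_character G (carrier G) \<chi>"
  shows "is_linear_character G (L <#> stab \<alpha>) (\<lambda>y. \<chi> y * ext_char \<alpha> y)"
  unfolding is_linear_character_iff[OF subgroup_L_stab[OF \<alpha>]] multiplicative_on_def
proof (intro conjI ballI allI impI)
  have "ext_char \<alpha> \<one> = 1"
    using ext_char_eq[OF \<alpha>, of \<one> \<one>] inter_subset_stab[OF \<alpha>] quot_char_one[OF \<alpha>] by auto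
  then show "\<chi> \<one> * ext_char \<alpha> \<one> = 1"
    using linear_character_one[OF subgroup_self \<chi>] by simp
next
  fix x y assume xy: "x \<in> L <#> stab \<alpha>" "y \<in> L <#> stab \<alpha>"
  then have "x \<in> carrier G" "y \<in> carrier G" using subgroup.mem_carrier[OF subgroup_L_stab[OF \<alpha>]] by auto
  then show "\<chi> (x \<otimes> y) * ext_char \<alpha> (x \<otimes> y) = \<chi> x * ext_char \<alpha> x * (\<chi> y * ext_char \<alpha> y)"
    using multiplicative_onD[OF linear_character_multiplicative[OF subgroup_self \<chi>]] ext_char_mult[OF \<alpha> xy]
    by simp
qed (simp add: ext_char_outside)

lemma ext_char_principal_quot_char: "ext_char principal_quot_char y = (if y \<in> L <#> H then 1 else 0)"
proof (cases "y \<in> L <#> H")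
  case True
  then obtain l h where "l \<in> L" "h \<in> H" "y = l \<otimes> h" unfolding set_mult_mem_iff by blast
  then show ?thesis using ext_char_eq[OF principal_quot_char] True
    by (simp add: stab_principal_quot_char principal_quot_char_def)
qed (simp add: ext_char_outside stab_principal_quot_char)

end

context abelian_modulo begin

lemma sum_quot_char_conj:
  assumes \<alpha>: "\<alpha> \<in> quot_chars" and h: "h \<in> H"
  shows "(\<Sum>m\<in>L. \<alpha> m * \<alpha> (h \<otimes> inv m \<otimes> inv h)) = (if h \<in> stab \<alpha> then of_nat (card L) else 0)"
proof -
  define \<beta> where "\<beta> m = \<alpha> m * \<alpha> (h \<otimes> inv m \<otimes> inv h)" for m
  have conj_L: "h \<otimes> inv m \<otimes> inv h \<in> L" if "m \<in> L" for m using normalizes[OF h] that by simp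
  have mult: "multiplicative_on G L \<beta>"
    unfolding multiplicative_on_def
  proof (intro ballI)
    fix x y assume xy: "x \<in> L" "y \<in> L"
    have "h \<otimes> inv (x \<otimes> y) \<otimes> inv h = (h \<otimes> inv y \<otimes> inv h) \<otimes> (h \<otimes> inv x \<otimes> inv h)"
      using xy h by (simp add: inv_mult_group m_assoc)
    then show "\<beta> (x \<otimes> y) = \<beta> x * \<beta> y"
      unfolding \<beta>_def using quot_char_mult[OF \<alpha> xy] quot_char_mult[OF \<alpha> conj_L[OF xy(2)] conj_L[OF xy(1)]]
      by simp
  qed
  have triv: "(\<forall>m\<in>L. \<beta> m = 1) \<longleftrightarrow> h \<in> stab \<alpha>"
  proof
    assume all: "\<forall>m\<in>L. \<beta> m = 1"
    have "\<alpha> (h \<otimes> l \<otimes> inv h) = \<alpha> l" if l: "l \<in> L" for l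
    proof -
      have "\<alpha> (inv l) * \<alpha> (h \<otimes> l \<otimes> inv h) = 1"
        using bspec[OF all L.m_inv_closed[OF l]] l unfolding \<beta>_def by simp
      then show ?thesis using quot_char_inv[OF \<alpha> l]
        by (metis mult.assoc mult.commute mult.right_neutral)
    qed
    then show "h \<in> stab \<alpha>" unfolding stab_def using h by blast
  next
    assume hs: "h \<in> stab \<alpha>"
    show "\<forall>m\<in>L. \<beta> m = 1"
    proof
      fix m assume m: "m \<in> L"
      have "\<alpha> (h \<otimes> inv m \<otimes> inv h) = \<alpha> (inv m)" using hs m unfolding stab_def by simp
      then show "\<beta> m = 1" unfolding \<beta>_def using quot_char_inv[OF \<alpha> m] by simp
    qed
  qed
  have "(\<Sum>m\<in>L. \<beta> m) = (if h \<in> stab \<alpha> then of_nat (card L) else 0)"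
    using sum_multiplicative_on[OF L mult] triv by simp
  then show ?thesis unfolding \<beta>_def .
qed

lemma conj_in_H_imp_in_LH:
  assumes y: "y \<in> carrier G" and m: "m \<in> L" "m \<otimes> y \<otimes> inv m \<in> H"
  shows "y \<in> L <#> H"
proof -
  define h where "h = m \<otimes> y \<otimes> inv m"
  have "y = (inv m \<otimes> (h \<otimes> m \<otimes> inv h)) \<otimes> h"
    unfolding h_def using m y by (simp add: m_assoc inv_mult_group)
  moreover have "inv m \<otimes> (h \<otimes> m \<otimes> inv h) \<in> L"
    using normalizes[of h m] m unfolding h_def by simp
  moreover have "h \<in> H" using m(2) unfolding h_def .
  ultimately show ?thesis unfolding set_mult_mem_iff by blast
qed

text \<open>Expanding the indicator of H through orthogonality of the characters of L/(H \<inter> L).\<close>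

lemma sum_ext_char:
  assumes y: "y \<in> carrier G"
  shows "of_nat (card L) * (\<Sum>\<alpha>\<in>quot_chars. ext_char \<alpha> y)
       = of_nat (card quot_chars) * of_nat (card {m\<in>L. m \<otimes> y \<otimes> inv m \<in> H})"
proof (cases "y \<in> L <#> H")
  case False
  have sum_0: "(\<Sum>\<alpha>\<in>quot_chars. ext_char \<alpha> y) = 0"
    using False mono_set_mult[OF subset_refl stab_subset] ext_char_outside by (meson subsetD sum.neutral)
  have empty: "{m\<in>L. m \<otimes> y \<otimes> inv m \<in> H} = {}"
    using conj_in_H_imp_in_LH[OF y] False by blast
  show ?thesis unfolding sum_0 empty by simp
next
  case True
  then obtain l h where lh: "l \<in> L" "h \<in> H" "y = l \<otimes> h" unfolding set_mult_mem_iff by blast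
  let ?A = quot_chars
  define z where "z m = m \<otimes> l \<otimes> (h \<otimes> inv m \<otimes> inv h)" for m
  have z_L: "z m \<in> L" if "m \<in> L" for m
    unfolding z_def using that lh normalizes[OF lh(2) L.m_inv_closed[OF that]] by simp
  have "m \<otimes> y \<otimes> inv m \<in> H \<longleftrightarrow> z m \<in> H" if m: "m \<in> L" for m
  proof -
    have "m \<otimes> y \<otimes> inv m = z m \<otimes> h" unfolding z_def lh(3) using m lh by (simp add: m_assoc)
    then show ?thesis using lh(2) z_L[OF m] H.m_closed H.m_inv_closed
      by (metis mult_inv_cancel_right L.mem_carrier H.mem_carrier)
  qed
  then have "of_nat (card ?A) * of_nat (card {m\<in>L. m \<otimes> y \<otimes> inv m \<in> H})
      = (\<Sum>m\<in>L. if z m \<in> H then of_nat (card ?A) else (0::complex))"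
    using finite_L by (simp add: sum.If_cases Int_def conj_commute cong: conj_cong)
  also have "\<dots> = (\<Sum>m\<in>L. \<Sum>\<alpha>\<in>?A. \<alpha> (z m))"
    by (rule sum.cong[OF refl]) (simp add: sum_quot_chars[OF z_L])
  also have "\<dots> = (\<Sum>\<alpha>\<in>?A. \<alpha> l * (\<Sum>m\<in>L. \<alpha> m * \<alpha> (h \<otimes> inv m \<otimes> inv h)))"
  proof -
    have "\<alpha> (z m) = \<alpha> l * (\<alpha> m * \<alpha> (h \<otimes> inv m \<otimes> inv h))" if "m \<in> L" "\<alpha> \<in> ?A" for m \<alpha>
      unfolding z_def using that lh quot_char_mult[OF \<open>\<alpha> \<in> ?A\<close>] normalizes[OF lh(2) L.m_inv_closed[OF \<open>m \<in> L\<close>]]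
      by simp
    then show ?thesis by (simp add: sum.swap[of _ L] sum_distrib_left)
  qed
  also have "\<dots> = (\<Sum>\<alpha>\<in>?A. \<alpha> l * (if h \<in> stab \<alpha> then of_nat (card L) else 0))"
    by (rule sum.cong[OF refl]) (simp add: sum_quot_char_conj[OF _ lh(2)])
  also have "\<dots> = of_nat (card L) * (\<Sum>\<alpha>\<in>?A. ext_char \<alpha> y)"
    unfolding lh(3) sum_distrib_left by (rule sum.cong[OF refl]) (simp add: ext_char_eq[OF _ lh(1,2)])
  finally show ?thesis by simp
qed

end

context abelian_modulo begin

lemma H_psubset_LH:
  assumes "\<not> L \<subseteq> H" shows "H \<subset> L <#> H"
proof -
  have "H \<subseteq> L <#> H"
  proof
    fix h assume "h \<in> H"
    then have "h = \<one> \<otimes> h" by simp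
    then show "h \<in> L <#> H" unfolding set_mult_mem_iff using \<open>h \<in> H\<close> L.one_closed by blast
  qed
  moreover have "L \<subseteq> L <#> H"
  proof
    fix l assume "l \<in> L"
    then have "l = l \<otimes> \<one>" by simp
    then show "l \<in> L <#> H" unfolding set_mult_mem_iff using \<open>l \<in> L\<close> H.one_closed by blast
  qed
  ultimately show ?thesis using assms by blast
qed

lemma card_LH_fibre:
  assumes y: "y \<in> L <#> H"
  shows "card {p \<in> L \<times> H. y = fst p \<otimes> snd p} = card (H \<inter> L)"
proof -
  obtain l0 h0 where lh: "l0 \<in> L" "h0 \<in> H" "y = l0 \<otimes> h0" using y unfolding set_mult_mem_iff by blast
  have "bij_betw (\<lambda>k. (l0 \<otimes> k, inv k \<otimes> h0)) (H \<inter> L) {p \<in> L \<times> H. y = fst p \<otimes> snd p}"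
  proof (rule bij_betwI[where g="\<lambda>p. inv l0 \<otimes> fst p"])
    show "(\<lambda>k. (l0 \<otimes> k, inv k \<otimes> h0)) \<in> H \<inter> L \<rightarrow> {p \<in> L \<times> H. y = fst p \<otimes> snd p}"
      using lh by (auto simp: m_assoc)
    show "(\<lambda>p. inv l0 \<otimes> fst p) \<in> {p \<in> L \<times> H. y = fst p \<otimes> snd p} \<rightarrow> H \<inter> L"
      using LH_decomp_unique(1)[OF _ lh(1) _ lh(2)] lh(3) by auto
    show "(l0 \<otimes> (inv l0 \<otimes> fst p), inv (inv l0 \<otimes> fst p) \<otimes> h0) = p"
      if "p \<in> {p \<in> L \<times> H. y = fst p \<otimes> snd p}" for p
    proof -
      obtain l h where pair: "p = (l, h)" by (cases p)
      with that have p: "p = (l, h)" "l \<in> L" "h \<in> H" "y = l \<otimes> h" by auto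
      have "h = (inv l \<otimes> l0) \<otimes> h0"
        using LH_decomp_unique(2)[OF lh(1) p(2) lh(2) p(3)] p(4) lh(3) by simp
      then show ?thesis using p lh by (simp add: inv_mult_group m_assoc)
    qed
  qed (use lh in simp)
  then show ?thesis by (simp add: bij_betw_same_card)
qed

lemma product_formula: "card (L <#> H) * card (H \<inter> L) = card L * card H"
proof -
  have "card L * card H = (\<Sum>p\<in>L \<times> H. card {y \<in> L <#> H. y = fst p \<otimes> snd p})"
  proof -
    have "{y \<in> L <#> H. y = fst p \<otimes> snd p} = {fst p \<otimes> snd p}" if "p \<in> L \<times> H" for p
      using that unfolding set_mult_mem_iff by fastforce
    then show ?thesis by (simp add: card_cartesian_product)
  qed
  also have "\<dots> = card (H \<inter> L) * card (L <#> H)"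
  proof (rule sum_multicount)
    show "finite (L <#> H)" using finite_subset[OF subgroup.subset[OF subgroup_LH] finite_carrier] .
  qed (use finite_L finite_H card_LH_fibre in auto)
  finally show ?thesis by simp
qed

lemma card_LH: "card (L <#> H) = card quot_chars * card H"
proof -
  have "card (L <#> H) * card (H \<inter> L) = (card quot_chars * card H) * card (H \<inter> L)"
    unfolding product_formula card_quot_chars[symmetric] by (simp only: ac_simps)
  then show ?thesis
    using subgroup.finite_imp_card_positive[OF subgroups_Inter_pair[OF H L] finite_carrier] by simp
qed

lemma ext_char_principal_quot_char_mult:
  "(\<lambda>y. \<chi> y * ext_char principal_quot_char y) = restrict_char (L <#> H) \<chi>"
  by (auto simp: ext_char_principal_quot_char restrict_char_def fun_eq_iff)

lemma sum_induce_ext_char: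
  assumes \<chi>: "is_linear_character G (carrier G) \<chi>" and g: "g \<in> carrier G"
  shows "(\<Sum>\<alpha>\<in>quot_chars. of_nat (card (L <#> stab \<alpha>)) * induce G (L <#> stab \<alpha>) (\<lambda>y. \<chi> y * ext_char \<alpha> y) g)
       = of_nat (card quot_chars * card H) * induce G H (restrict_char H \<chi>) g"
    (is "?lhs = ?rhs")
proof -
  let ?A = quot_chars
  let ?y = "\<lambda>x. x \<otimes> g \<otimes> inv x"
  have \<chi>_conj: "\<chi> (m \<otimes> y \<otimes> inv m) = \<chi> y" if "m \<in> carrier G" "y \<in> carrier G" for m y
    using linear_character_conj[OF subgroup_self \<chi>, of "inv m" y] that by simp
  have "?lhs = (\<Sum>\<alpha>\<in>?A. \<Sum>x\<in>carrier G. \<chi> (?y x) * ext_char \<alpha> (?y x))"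
  proof (rule sum.cong[OF refl])
    fix \<alpha> assume \<alpha>: "\<alpha> \<in> ?A"
    have "of_nat (card (L <#> stab \<alpha>)) * induce G (L <#> stab \<alpha>) (\<lambda>y. \<chi> y * ext_char \<alpha> y) g
        = (\<Sum>x\<in>carrier G. if ?y x \<in> L <#> stab \<alpha> then \<chi> (?y x) * ext_char \<alpha> (?y x) else 0)"
      by (rule card_mult_induce[OF finite_carrier subgroup_L_stab[OF \<alpha>] g])
    also have "\<dots> = (\<Sum>x\<in>carrier G. \<chi> (?y x) * ext_char \<alpha> (?y x))"
      by (rule sum.cong) (auto simp: ext_char_outside)
    finally show "of_nat (card (L <#> stab \<alpha>)) * induce G (L <#> stab \<alpha>) (\<lambda>y. \<chi> y * ext_char \<alpha> y) g
        = (\<Sum>x\<in>carrier G. \<chi> (?y x) * ext_char \<alpha> (?y x))" .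
  qed
  also have "\<dots> = (\<Sum>x\<in>carrier G. \<chi> (?y x) * (\<Sum>\<alpha>\<in>?A. ext_char \<alpha> (?y x)))"
    by (simp add: sum.swap[of _ ?A] sum_distrib_left)
  finally have "of_nat (card L) * ?lhs
      = (\<Sum>x\<in>carrier G. \<chi> (?y x) * (of_nat (card L) * (\<Sum>\<alpha>\<in>?A. ext_char \<alpha> (?y x))))"
    by (simp add: sum_distrib_left mult.left_commute)
  also have "\<dots> = (\<Sum>x\<in>carrier G. of_nat (card ?A) * (\<chi> (?y x) * of_nat (card {m\<in>L. m \<otimes> ?y x \<otimes> inv m \<in> H})))"
    by (rule sum.cong[OF refl]) (simp add: sum_ext_char g mult.left_commute)
  also have "\<dots> = of_nat (card ?A) * (\<Sum>x\<in>carrier G. \<chi> (?y x) * of_nat (card {m\<in>L. m \<otimes> ?y x \<otimes> inv m \<in> H}))"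
    by (simp add: sum_distrib_left)
  also have "\<dots> = of_nat (card L) * (of_nat (card ?A) * (\<Sum>x\<in>carrier G. if ?y x \<in> H then \<chi> (?y x) else 0))"
    using sum_conj_count[OF finite_carrier L.subset g \<chi>_conj] by simp
  also have "\<dots> = of_nat (card L) * ?rhs"
  proof -
    have "(\<Sum>x\<in>carrier G. if ?y x \<in> H then \<chi> (?y x) else 0) = of_nat (card H) * induce G H (restrict_char H \<chi>) g"
      unfolding card_mult_induce[OF finite_carrier H g] restrict_char_def by (rule sum.cong) auto
    then show ?thesis by (simp add: mult.assoc)
  qed
  finally have "of_nat (card L) * ?lhs = of_nat (card L) * ?rhs" .
  moreover have "card L \<noteq> 0" using finite_L L.one_closed card_0_eq by blast
  ultimately show ?thesis by simp
qed

end

section \<open>Functions satisfying (ACH1)-(ACH3)\<close>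

locale ach_function = group G for G (structure) +
  fixes n :: "'a set \<Rightarrow> ('a \<Rightarrow> complex) \<Rightarrow> int"
  assumes additive: "\<And>K \<phi>1 \<phi>2. subgroup K G \<Longrightarrow> is_character G K \<phi>1 \<Longrightarrow> is_character G K \<phi>2 \<Longrightarrow>
      n K (\<lambda>x. \<phi>1 x + \<phi>2 x) = n K \<phi>1 + n K \<phi>2"
    and induce: "\<And>K \<psi>. subgroup K G \<Longrightarrow> is_character G K \<psi> \<Longrightarrow> n (carrier G) (induce G K \<psi>) = n K \<psi>"
    and nonneg: "\<And>K \<psi>. subgroup K G \<Longrightarrow> is_linear_character G K \<psi> \<Longrightarrow> n K \<psi> \<ge> 0"
begin

lemma additive_carrier_of_nat_mult:
  assumes "is_character G (carrier G) f"
  shows "n (carrier G) (\<lambda>x. of_nat c * f x) = int c * n (carrier G) f"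
proof (rule additive_of_nat_mult[of G "carrier G" "n (carrier G)"])
  show "n (carrier G) (\<lambda>x. f x + g x) = n (carrier G) f + n (carrier G) g"
    if "is_character G (carrier G) f" "is_character G (carrier G) g" for f g
    using additive[OF subgroup_self that] .
qed (fact assms)

lemma additive_carrier_sum:
  assumes "finite I" "\<And>i. i \<in> I \<Longrightarrow> is_character G (carrier G) (f i)"
  shows "n (carrier G) (\<lambda>x. \<Sum>i\<in>I. f i x) = (\<Sum>i\<in>I. n (carrier G) (f i))"
proof (rule additive_sum[of G "carrier G" "n (carrier G)"])
  show "n (carrier G) (\<lambda>x. f x + g x) = n (carrier G) f + n (carrier G) g"
    if "is_character G (carrier G) f" "is_character G (carrier G) g" for f g
    using additive[OF subgroup_self that] .
qed (use assms in auto)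

lemma induce_linear_character:
  assumes "finite (carrier G)" "subgroup K G" "is_linear_character G K \<psi>"
  shows "is_character G (carrier G) (induce G K \<psi>)" "n (carrier G) (induce G K \<psi>) = n K \<psi>"
  using is_character_induce_linear_character[OF assms(2,3,1)] induce[OF assms(2)] assms(3)
  unfolding is_linear_character_def by auto

end

locale ach_abelian_modulo = ach_function G n + abelian_modulo G H L
  for G (structure) and n H L
begin

text \<open>Apply n to the decomposition of |quot_chars| |H| Ind_H (\<chi>|_H) into characters induced
  from the linear characters \<chi> \<cdot> ext_char \<alpha>.\<close>

lemma n_restrict_char_decomposition:
  assumes \<chi>: "is_linear_character G (carrier G) \<chi>"
  shows "int (card quot_chars * card H) * n H (restrict_char H \<chi>)
       = (\<Sum>\<alpha>\<in>quot_chars. int (card (L <#> stab \<alpha>)) * n (L <#> stab \<alpha>) (\<lambda>y. \<chi> y * ext_char \<alpha> y))"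
proof -
  let ?A = quot_chars
  let ?S = "\<lambda>\<alpha>. L <#> stab \<alpha>"
  let ?\<psi> = "\<lambda>\<alpha> y. \<chi> y * ext_char \<alpha> y"
  let ?\<chi>H = "restrict_char H \<chi>"
  have ind_\<psi>: "is_character G (carrier G) (induce G (?S \<alpha>) (?\<psi> \<alpha>))"
    "n (carrier G) (induce G (?S \<alpha>) (?\<psi> \<alpha>)) = n (?S \<alpha>) (?\<psi> \<alpha>)" if "\<alpha> \<in> ?A" for \<alpha>
    using induce_linear_character[OF finite_carrier subgroup_L_stab[OF that]
        is_linear_character_ext_char[OF that \<chi>]] by auto
  have ind_H: "is_character G (carrier G) (induce G H ?\<chi>H)" "n (carrier G) (induce G H ?\<chi>H) = n H ?\<chi>H"
    using induce_linear_character[OF finite_carrier H is_linear_character_restrict_char[OF H \<chi>]] by auto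
  have ind_\<psi>_mult: "is_character G (carrier G) (\<lambda>x. of_nat (card (?S \<alpha>)) * induce G (?S \<alpha>) (?\<psi> \<alpha>) x)"
    if "\<alpha> \<in> ?A" for \<alpha>
    using is_character_of_nat_mult[OF ind_\<psi>(1)[OF that]] .
  have "int (card ?A * card H) * n H ?\<chi>H = int (card ?A * card H) * n (carrier G) (induce G H ?\<chi>H)"
    using ind_H(2) by (rule arg_cong[symmetric])
  also have "\<dots> = n (carrier G) (\<lambda>x. of_nat (card ?A * card H) * induce G H ?\<chi>H x)"
    by (rule additive_carrier_of_nat_mult[OF ind_H(1), symmetric])
  also have "(\<lambda>x. of_nat (card ?A * card H) * induce G H ?\<chi>H x)
      = (\<lambda>x. \<Sum>\<alpha>\<in>?A. of_nat (card (?S \<alpha>)) * induce G (?S \<alpha>) (?\<psi> \<alpha>) x)"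
  proof
    fix x show "of_nat (card ?A * card H) * induce G H ?\<chi>H x
        = (\<Sum>\<alpha>\<in>?A. of_nat (card (?S \<alpha>)) * induce G (?S \<alpha>) (?\<psi> \<alpha>) x)"
    proof (cases "x \<in> carrier G")
      case True
      then show ?thesis by (rule sum_induce_ext_char[OF \<chi>, symmetric])
    qed (simp add: induce_def)
  qed
  also have "n (carrier G) \<dots> = (\<Sum>\<alpha>\<in>?A. n (carrier G) (\<lambda>x. of_nat (card (?S \<alpha>)) * induce G (?S \<alpha>) (?\<psi> \<alpha>) x))"
    by (rule additive_carrier_sum[OF finite_quot_chars ind_\<psi>_mult])
  also have "\<dots> = (\<Sum>\<alpha>\<in>?A. int (card (?S \<alpha>)) * n (?S \<alpha>) (?\<psi> \<alpha>))"
  proof (rule sum.cong[OF refl])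
    fix \<alpha> assume \<alpha>: "\<alpha> \<in> ?A"
    show "n (carrier G) (\<lambda>x. of_nat (card (?S \<alpha>)) * induce G (?S \<alpha>) (?\<psi> \<alpha>) x)
        = int (card (?S \<alpha>)) * n (?S \<alpha>) (?\<psi> \<alpha>)"
      unfolding additive_carrier_of_nat_mult[OF ind_\<psi>(1)[OF \<alpha>]] ind_\<psi>(2)[OF \<alpha>] ..
  qed
  finally show ?thesis .
qed

text \<open>In the decomposition the principal character contributes the left-hand side below,
  and all other terms are nonnegative by (ACH3).\<close>

lemma restrict_char_set_mult_le:
  assumes \<chi>: "is_linear_character G (carrier G) \<chi>"
  shows "n (L <#> H) (restrict_char (L <#> H) \<chi>) \<le> n H (restrict_char H \<chi>)"
proof -
  let ?c = "\<lambda>\<alpha>. int (card (L <#> stab \<alpha>)) * n (L <#> stab \<alpha>) (\<lambda>y. \<chi> y * ext_char \<alpha> y)"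
  have "?c principal_quot_char \<le> (\<Sum>\<alpha>\<in>quot_chars. ?c \<alpha>)"
  proof (rule member_le_sum[OF principal_quot_char _ finite_quot_chars])
    fix \<alpha> assume "\<alpha> \<in> quot_chars - {principal_quot_char}"
    then show "0 \<le> ?c \<alpha>"
      using nonneg[OF subgroup_L_stab is_linear_character_ext_char[OF _ \<chi>]] by simp
  qed
  then have "int (card quot_chars * card H) * n (L <#> H) (restrict_char (L <#> H) \<chi>)
      \<le> int (card quot_chars * card H) * n H (restrict_char H \<chi>)"
    by (simp only: n_restrict_char_decomposition[OF \<chi>, symmetric] stab_principal_quot_char
        ext_char_principal_quot_char_mult card_LH)
  moreover have "int (card quot_chars * card H) > 0"
  proof -
    have "card quot_chars > 0" using finite_quot_chars principal_quot_char by (auto simp: card_gt_0_iff)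
    then show ?thesis using H.finite_imp_card_positive[OF finite_carrier] by simp
  qed
  ultimately show ?thesis by (rule mult_left_le_imp_le)
qed

end

context group begin

lemma derived_series_normal: "(derived G ^^ i) (carrier G) \<lhd> G"
  by (induction i) (simp_all add: normal_self derived_is_normal)

lemma commutator_in_derived: "a \<in> X \<Longrightarrow> b \<in> X \<Longrightarrow> a \<otimes> b \<otimes> inv a \<otimes> inv b \<in> derived G X"
  unfolding derived_def by (rule generate.incl) blast

text \<open>Take for L the last term of the derived series that is not contained in H.\<close>

lemma solvable_obtains_abelian_modulo:
  assumes fin: "finite (carrier G)" and solv: "solvable G" and H: "subgroup H G" and ne: "H \<noteq> carrier G"
  obtains L where "abelian_modulo G H L" "\<not> L \<subseteq> H"
proof -
  define D where "D i = (derived G ^^ i) (carrier G)" for i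
  obtain N where "D N = {\<one>}" using solv unfolding solvable_iff_trivial_derived_seq D_def by blast
  then have "D N \<subseteq> H" using subgroup.one_closed[OF H] by auto
  define k where "k = (LEAST k. D k \<subseteq> H)"
  have Dk: "D k \<subseteq> H" unfolding k_def by (rule LeastI) fact
  have "k \<noteq> 0" using Dk ne subgroup.subset[OF H] unfolding D_def by auto
  then obtain i where k: "k = Suc i" using not0_implies_Suc by blast
  have Di: "\<not> D i \<subseteq> H" using not_less_Least[of i "\<lambda>k. D k \<subseteq> H"] k unfolding k_def by simp
  have normal: "D i \<lhd> G" unfolding D_def by (rule derived_series_normal)
  have "abelian_modulo G H (D i)"
  proof (intro abelian_modulo.intro abelian_modulo_axioms.intro is_group)
    show "finite (carrier G)" "subgroup H G" by fact+
    show "subgroup (D i) G" using normal by (rule normal_imp_subgroup)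
    show "h \<otimes> l \<otimes> inv h \<in> D i" if "h \<in> H" "l \<in> D i" for h l
      using normal subgroup.mem_carrier[OF H that(1)] that(2) by (simp add: normal_inv_iff)
    show "a \<otimes> b \<otimes> inv a \<otimes> inv b \<in> H" if "a \<in> D i" "b \<in> D i" for a b
      using commutator_in_derived[OF that] Dk k unfolding D_def by auto
  qed
  then show thesis using that Di by blast
qed

end

context ach_function begin

theorem le_restrict_char:
  assumes fin: "finite (carrier G)" and solv: "solvable G" and \<chi>: "is_linear_character G (carrier G) \<chi>"
    and H: "subgroup H G"
  shows "n (carrier G) \<chi> \<le> n H (restrict_char H \<chi>)"
  using H
proof (induction "card (carrier G) - card H" arbitrary: H rule: less_induct)
  case less
  show ?case
  proof (cases "H = carrier G")
    case True
    then have "restrict_char H \<chi> = \<chi>"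
      using linear_character_outside[OF subgroup_self \<chi>] by (auto simp: restrict_char_def fun_eq_iff)
    then show ?thesis using True by simp
  next
    case False
    obtain L where HL: "abelian_modulo G H L" and L_not_H: "\<not> L \<subseteq> H"
      using solvable_obtains_abelian_modulo[OF fin solv less.prems False] by blast
    interpret abelian_modulo G H L by (fact HL)
    interpret ach_abelian_modulo G n H L by intro_locales
    have "card H < card (L <#> H)"
      by (rule psubset_card_mono[OF finite_subset[OF subgroup.subset[OF subgroup_LH] fin] H_psubset_LH[OF L_not_H]])
    moreover have "card (L <#> H) \<le> card (carrier G)"
      by (rule card_mono[OF fin subgroup.subset[OF subgroup_LH]])
    ultimately have "n (carrier G) \<chi> \<le> n (L <#> H) (restrict_char (L <#> H) \<chi>)"
      by (intro less.hyps subgroup_LH) auto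
    also have "\<dots> \<le> n H (restrict_char H \<chi>)" by (rule restrict_char_set_mult_le[OF \<chi>])
    finally show ?thesis .
  qed
qed

end

lemma (in group) char_inner_linear_characters:
  assumes fin: "finite (carrier G)" and H: "subgroup H G"
    and \<psi>: "is_linear_character G H \<psi>" and \<phi>: "is_linear_character G H \<phi>"
  shows "char_inner H \<psi> \<phi> = (if \<forall>h\<in>H. \<phi> h = \<psi> h then 1 else 0)"
proof -
  have unit: "\<phi> h * cnj (\<phi> h) = 1" if "h \<in> H" for h
    using multiplicative_on_norm[OF fin H linear_character_multiplicative[OF H \<phi>]
        linear_character_one[OF H \<phi>] that]
    by (simp add: complex_norm_square[symmetric])
  define \<beta> where "\<beta> h = \<psi> h * cnj (\<phi> h)" for h
  have mult: "multiplicative_on G H \<beta>"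
    using multiplicative_onD[OF linear_character_multiplicative[OF H \<psi>]]
      multiplicative_onD[OF linear_character_multiplicative[OF H \<phi>]]
    unfolding \<beta>_def multiplicative_on_def by simp
  have "\<beta> h = 1 \<longleftrightarrow> \<phi> h = \<psi> h" if h: "h \<in> H" for h
  proof
    have "\<beta> h * \<phi> h = \<psi> h" using unit[OF h] unfolding \<beta>_def by (simp add: mult.assoc mult.commute)
    then show "\<beta> h = 1 \<Longrightarrow> \<phi> h = \<psi> h" by simp
    show "\<phi> h = \<psi> h \<Longrightarrow> \<beta> h = 1" using unit[OF h] unfolding \<beta>_def by simp
  qed
  then have "(\<Sum>h\<in>H. \<beta> h) = (if \<forall>h\<in>H. \<phi> h = \<psi> h then of_nat (card H) else 0)"
    using sum_multiplicative_on[OF H mult] by simp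
  moreover have "card H > 0" using subgroup.finite_imp_card_positive[OF H fin] .
  ultimately show ?thesis unfolding char_inner_def \<beta>_def by simp
qed

theorem proposition5p2p1:
  fixes G :: "('a, 'b) monoid_scheme"
    and n :: "'a set \<Rightarrow> ('a \<Rightarrow> complex) \<Rightarrow> int"
    and H :: "'a set" and \<chi> \<phi> :: "'a \<Rightarrow> complex"
  assumes "group G" and "finite (carrier G)" and "solvable G"
    and ACH1: "\<And>K \<phi>1 \<phi>2. subgroup K G \<Longrightarrow> is_character G K \<phi>1 \<Longrightarrow> is_character G K \<phi>2 \<Longrightarrow>
                 n K (\<lambda>x. \<phi>1 x + \<phi>2 x) = n K \<phi>1 + n K \<phi>2"
    and ACH2: "\<And>K \<psi>. subgroup K G \<Longrightarrow> is_character G K \<psi> \<Longrightarrow>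
                 n (carrier G) (induce G K \<psi>) = n K \<psi>"
    and ACH3: "\<And>K \<psi>. subgroup K G \<Longrightarrow> is_linear_character G K \<psi> \<Longrightarrow> n K \<psi> \<ge> 0"
    and "subgroup H G"
    and "is_linear_character G (carrier G) \<chi>"
    and "is_linear_character G H \<phi>"
  shows "real_of_int (n (carrier G) (induce G H \<phi>))
           \<ge> Re (char_inner H (restrict_char H \<chi>) \<phi>) * real_of_int (n (carrier G) \<chi>)"
proof -
  interpret ach_function G n
    by (rule ach_function.intro[OF assms(1) ach_function_axioms.intro]) (fact ACH1 ACH2 ACH3)+
  note fin = assms(2) and H = assms(7) and \<chi> = assms(8) and \<phi> = assms(9)
  have ind: "n (carrier G) (induce G H \<phi>) = n H \<phi>"
    using induce[OF H] \<phi> unfolding is_linear_character_def by blast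
  note inner = char_inner_linear_characters[OF fin H is_linear_character_restrict_char[OF H \<chi>] \<phi>]
  show ?thesis
  proof (cases "\<forall>h\<in>H. \<phi> h = restrict_char H \<chi> h")
    case True
    then have "\<phi> = restrict_char H \<chi>"
      using linear_character_outside[OF H \<phi>] by (auto simp: restrict_char_def fun_eq_iff)
    moreover have "char_inner H (restrict_char H \<chi>) \<phi> = 1" unfolding inner using True by (rule if_P)
    ultimately show ?thesis using ind le_restrict_char[OF fin assms(3) \<chi> H] by simp
  next
    case False
    then have "char_inner H (restrict_char H \<chi>) \<phi> = 0" unfolding inner by (rule if_not_P)
    then show ?thesis using ind nonneg[OF H \<phi>] by simp
  qed
qed

end
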